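(* Let $k,s\in\mathbb{R}$ with $\max\{0,s\}<2k+1/2$ and $s\le k+1/2$. Let $b>1/2$ and $\max\{1/4,\ \max\{0,s\}-2k\}<a<1/2$. Then there is a constant $C$ such that for all $u,w\in X^{k,b}$, $$\|u\bar w\|_{H^{-a}_tH^s_x}\le C\|u\|_{X^{k,b}}\|w\|_{X^{k,b}}.$$
   Context: Functions are on $\mathbb{R}_x\times\mathbb{R}_t$; $\widehat f$ is the space-time Fourier transform, $\langle x\rangle=1+|x|$. $\|f\|_{X^{s,b}}=\big(\int\langle\xi\rangle^{2s}\langle\tau+\tfrac12\xi^2\rangle^{2b}|\widehat f(\xi,\tau)|^2d\xi d\tau\big)^{1/2}$, $\|f\|_{H^b_tH^s_x}=\big(\int\langle\xi\rangle^{2s}\langle\tau\rangle^{2b}|\widehat f(\xi,\tau)|^2d\xi d\tau\big)^{1/2}$. *)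

theory Defs
  imports "HOL-Analysis.Analysis"
begin

text \<open>Everything is expressed on the Fourier side: a space-time function/distribution
  u is represented by its space-time Fourier transform U = hat u :: real*real => complex,
  with first coordinate the spatial frequency xi and second the time frequency tau.\<close>

definition jbr :: "real \<Rightarrow> real" where
  "jbr x = 1 + \<bar>x\<bar>"

definition Xsb_sq :: "real \<Rightarrow> real \<Rightarrow> (real \<times> real \<Rightarrow> complex) \<Rightarrow> ennreal" where
  "Xsb_sq sx b U = (\<integral>\<^sup>+ p. (ennreal ((jbr (fst p) powr (2 * sx)) * (jbr (snd p + (fst p)^2 / 2) powr (2 * b))
                      * (cmod (U p))^2)) \<partial>lborel)"

definition HbHs_sq :: "real \<Rightarrow> real \<Rightarrow> (real \<times> real \<Rightarrow> complex) \<Rightarrow> ennreal" where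
  "HbHs_sq b sx U = (\<integral>\<^sup>+ p. (ennreal ((jbr (fst p) powr (2 * sx)) * (jbr (snd p) powr (2 * b))
                      * (cmod (U p))^2)) \<partial>lborel)"

definition in_Xsb :: "real \<Rightarrow> real \<Rightarrow> (real \<times> real \<Rightarrow> complex) \<Rightarrow> bool" where
  "in_Xsb s b U \<longleftrightarrow> U \<in> borel_measurable lborel \<and> Xsb_sq s b U < \<infinity>"

definition Xsb_norm :: "real \<Rightarrow> real \<Rightarrow> (real \<times> real \<Rightarrow> complex) \<Rightarrow> real" where
  "Xsb_norm s b U = sqrt (enn2real (Xsb_sq s b U))"

definition HbHs_norm :: "real \<Rightarrow> real \<Rightarrow> (real \<times> real \<Rightarrow> complex) \<Rightarrow> real" where
  "HbHs_norm b s U = sqrt (enn2real (HbHs_sq b s U))"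

text \<open>Fourier transform of the product u * conj w, given hat u = U, hat w = W
  (up to the normalising constant of the Fourier transform, which is absorbed in C):
  hat(u conj w)(p) = int U(q) conj(W(q - p)) dq.\<close>
definition prod_conj_FT :: "(real \<times> real \<Rightarrow> complex) \<Rightarrow> (real \<times> real \<Rightarrow> complex) \<Rightarrow> (real \<times> real \<Rightarrow> complex)" where
  "prod_conj_FT U W = (\<lambda>p. \<integral> q. U q * cnj (W (q - p)) \<partial>lborel)"

end

theory Submission
  imports Defs
begin

(* On the Fourier side |(u conj w)^(p)| is at most \<integral> |U(q)| |W(q - p)| dq, and
   |U(q)| |W(q - p)| = f(q) g(q - p) K(p, q) with f, g the X^{k,b}-weighted U, W and an
   explicit kernel K, so the estimate is a weighted L^2 bound for a bilinear operator.
   Phase space is split into three regions; on each of them the squared weighted kernel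
   is integrable uniformly in one of the variables p, q or q - p, and Cauchy-Schwarz then
   gives the bound (a Schur test).  Everything reduces to one-dimensional integrals of
   powers of <x> = 1 + |x|.  The regions are chosen by the size of the output frequency \<xi>,
   by whether both input frequencies are much larger than |\<xi>|, and by which of the
   modulations <\<tau>>, <\<tau>1 + \<xi>1^2/2>, <\<tau>1 - \<tau> + (\<xi>1 - \<xi>)^2/2> is largest.  These differ
   by the resonance \<xi> \<xi>1 - \<xi>^2/2, so the largest one controls it.  The resonance is affine
   in \<xi>1 with slope \<xi>, so integrating a power of it in \<xi>1 gains the factor 1/|\<xi>| that
   pays for <\<xi>>^(2s); in the high-high region the same is done with the roles of \<xi> and of an
   input frequency exchanged. *)

section \<open>The Japanese bracket\<close>

lemma jbr_ge_1 [simp]: "1 \<le> jbr x"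
  by (simp add: jbr_def)

lemma jbr_pos [simp]: "0 < jbr x"
  by (simp add: jbr_def)

lemma jbr_nonneg [simp]: "0 \<le> jbr x"
  by (simp add: jbr_def)

lemma jbr_neq_0 [simp]: "jbr x \<noteq> 0"
  by (simp add: jbr_def)

lemma jbr_uminus: "jbr (- x) = jbr x"
  by (simp add: jbr_def)

lemma jbr_minus_commute: "jbr (x - y) = jbr (y - x)"
  by (simp add: jbr_def abs_minus_commute)

lemma jbr_mono: "\<bar>x\<bar> \<le> \<bar>y\<bar> \<Longrightarrow> jbr x \<le> jbr y"
  by (simp add: jbr_def)

lemma jbr_le_mult:
  assumes "\<bar>x\<bar> \<le> \<bar>y\<bar> + \<bar>z\<bar>"
  shows "jbr x \<le> jbr y * jbr z"
  using assms mult_nonneg_nonneg[OF abs_ge_zero abs_ge_zero, of y z]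
  unfolding jbr_def by (simp add: algebra_simps del: mult_nonneg_nonneg)

lemma jbr_diff_le_mult: "jbr (x - y) \<le> jbr x * jbr y"
  by (rule jbr_le_mult) (rule abs_triangle_ineq4)

lemma borel_measurable_jbr [measurable]:
  "f \<in> borel_measurable M \<Longrightarrow> (\<lambda>x. jbr (f x)) \<in> borel_measurable M"
  unfolding jbr_def by measurable

lemma jbr_powr_le_1: "e \<le> 0 \<Longrightarrow> jbr x powr e \<le> 1"
  using powr_mono[of e 0 "jbr x"] by simp

lemma jbr_powr_mono: "0 \<le> e \<Longrightarrow> \<bar>x\<bar> \<le> \<bar>y\<bar> \<Longrightarrow> jbr x powr e \<le> jbr y powr e"
  by (intro powr_mono2 jbr_mono) auto

lemma jbr_powr_antimono: "e \<le> 0 \<Longrightarrow> \<bar>x\<bar> \<le> \<bar>y\<bar> \<Longrightarrow> jbr y powr e \<le> jbr x powr e"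
  by (intro powr_mono2' jbr_mono) auto

lemma powr_minus_le_of_le_mult:
  fixes A B c e :: real
  assumes "0 < A" "0 < B" "0 < c" "A \<le> c * B" "0 \<le> e"
  shows "B powr (-e) \<le> c powr e * A powr (-e)"
proof -
  have "A powr e \<le> c powr e * B powr e"
    using assms powr_mono2[of e A "c * B"] by (simp add: powr_mult)
  then show ?thesis
    using assms by (simp add: powr_minus divide_simps mult.commute)
qed

lemma jbr_powr_mult_le_of_comparable:
  assumes "jbr u \<le> 2 * jbr v" "jbr v \<le> 2 * jbr u"
  shows "jbr u powr (-2*k) * jbr v powr (-2*k) \<le> 2 powr (2*\<bar>k\<bar>) * jbr v powr (-4*k)"
proof -
  have "jbr u powr (-2*k) \<le> 2 powr (2*\<bar>k\<bar>) * jbr v powr (-2*k)"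
  proof (cases "0 \<le> k")
    case True
    then show ?thesis
      using powr_minus_le_of_le_mult[of "jbr v" "jbr u" 2 "2*k"] assms by simp
  next
    case False
    have "jbr u powr (-2*k) \<le> (2 * jbr v) powr (-2*k)"
      using assms False by (intro powr_mono2) auto
    then show ?thesis
      using False by (simp add: powr_mult)
  qed
  then have "jbr u powr (-2*k) * jbr v powr (-2*k) \<le> 2 powr (2*\<bar>k\<bar>) * jbr v powr (-2*k) * jbr v powr (-2*k)"
    by (rule mult_right_mono) simp
  then show ?thesis
    by (simp add: powr_add[symmetric] mult.assoc)
qed

section \<open>One-dimensional integrals of bracket powers\<close>

definition jbr_integral :: "real \<Rightarrow> ennreal" where
  "jbr_integral p = (\<integral>\<^sup>+x. ennreal (jbr x powr (-p)) \<partial>lborel)"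

lemma jbr_integral_le:
  assumes "1 < p"
  shows "jbr_integral p \<le> ennreal (2 / (p - 1))"
proof -
  let ?f = "\<lambda>x. ennreal (jbr x powr (-p))"
  have tail: "((\<lambda>y. y powr (-p)) has_integral 1 / (p - 1)) {1..}"
    using has_integral_powr_to_inf[of "-p" 1] assms by (simp add: minus_divide_right)
  have "(\<integral>\<^sup>+y. ennreal (y powr (-p)) * indicator {1..} y \<partial>lborel) = ennreal (1 / (p - 1))"
    by (rule nn_integral_has_integral_lebesgue'[OF _ tail]) simp
  also have "(\<integral>\<^sup>+y. ennreal (y powr (-p)) * indicator {1..} y \<partial>lborel)
      = (\<integral>\<^sup>+x. ennreal ((1 + x) powr (-p)) * indicator {1..} (1 + x) \<partial>lborel)"
    using nn_integral_real_affine[of "\<lambda>y. ennreal (y powr (-p)) * indicator {1..} y" 1 1] by simp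
  also have "\<dots> = (\<integral>\<^sup>+x. ?f x * indicator {0..} x \<partial>lborel)"
    by (intro nn_integral_cong) (auto simp: indicator_def jbr_def)
  finally have pos: "(\<integral>\<^sup>+x. ?f x * indicator {0..} x \<partial>lborel) = ennreal (1 / (p - 1))" .
  have "(\<integral>\<^sup>+x. ?f x * indicator {..0} x \<partial>lborel)
      = (\<integral>\<^sup>+x. ?f (- x) * indicator {..0} (- x) \<partial>lborel)"
    using nn_integral_real_affine[of "\<lambda>x. ?f x * indicator {..0} x" "-1" 0] by simp
  also have "\<dots> = (\<integral>\<^sup>+x. ?f x * indicator {0..} x \<partial>lborel)"
    by (intro nn_integral_cong) (auto simp: indicator_def jbr_uminus)
  finally have neg: "(\<integral>\<^sup>+x. ?f x * indicator {..0} x \<partial>lborel) = ennreal (1 / (p - 1))"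
    using pos by simp
  have "jbr_integral p \<le> (\<integral>\<^sup>+x. ?f x * indicator {0..} x + ?f x * indicator {..0} x \<partial>lborel)"
    unfolding jbr_integral_def by (intro nn_integral_mono) (auto simp: indicator_def)
  also have "\<dots> = ennreal (1 / (p - 1)) + ennreal (1 / (p - 1))"
    by (subst nn_integral_add) (auto simp: pos neg)
  finally show ?thesis
    using assms by (simp add: ennreal_plus[symmetric] del: ennreal_plus)
qed

lemma jbr_integral_finite: "1 < p \<Longrightarrow> jbr_integral p < \<infinity>"
  using jbr_integral_le[of p] by (simp add: le_less_trans)

lemma jbr_integral_affine:
  assumes "c \<noteq> 0"
  shows "ennreal \<bar>c\<bar> * (\<integral>\<^sup>+x. ennreal (jbr (d + c * x) powr (-p)) \<partial>lborel) = jbr_integral p"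
  unfolding jbr_integral_def by (rule nn_integral_real_affine[symmetric]) (use assms in auto)

lemma jbr_integral_shift: "(\<integral>\<^sup>+x. ennreal (jbr (x - c) powr (-p)) \<partial>lborel) = jbr_integral p"
  using jbr_integral_affine[of 1 "-c" p] by simp

lemma jbr_powr_mult_le:
  assumes "0 \<le> q" "q \<le> p"
  shows "jbr (x - \<alpha>) powr (-p) * jbr (x - \<beta>) powr (-q)
     \<le> 2 powr q * jbr (\<alpha> - \<beta>) powr (-q) * (jbr (x - \<alpha>) powr (-p) + jbr (x - \<beta>) powr (-p))"
proof -
  define A B D where "A = jbr (x - \<alpha>)" and "B = jbr (x - \<beta>)" and "D = jbr (\<alpha> - \<beta>)"
  have pos: "0 < A" "0 < B" "0 < D" "1 \<le> B"
    unfolding A_def B_def D_def by simp_all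
  have "\<bar>\<alpha> - \<beta>\<bar> \<le> \<bar>x - \<alpha>\<bar> + \<bar>x - \<beta>\<bar>"
    by linarith
  then have D_le: "D \<le> A + B"
    unfolding A_def B_def D_def jbr_def by linarith
  have "A powr (-p) * B powr (-q) \<le> 2 powr q * D powr (-q) * (A powr (-p) + B powr (-p))"
  proof (cases "A \<le> B")
    case True
    then have "B powr (-q) \<le> 2 powr q * D powr (-q)"
      using D_le pos assms by (intro powr_minus_le_of_le_mult) auto
    then have "A powr (-p) * B powr (-q) \<le> 2 powr q * D powr (-q) * A powr (-p)"
      by (simp add: mult_left_mono mult.commute)
    then show ?thesis
      by (simp add: distrib_left add_increasing2)
  next
    case False
    then have A_pow: "A powr (-q) \<le> 2 powr q * D powr (-q)"
      using D_le pos assms by (intro powr_minus_le_of_le_mult) auto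
    have "A powr (q - p) \<le> B powr (q - p)"
      using False pos assms by (intro powr_mono2') auto
    then have "A powr (-p) * B powr (-q) = A powr (-q) * (A powr (q - p) * B powr (-q))"
      and "A powr (q - p) * B powr (-q) \<le> B powr (-p)"
      using mult_right_mono[of "A powr (q - p)" "B powr (q - p)" "B powr (-q)"]
      by (simp_all add: powr_add[symmetric])
    then have "A powr (-p) * B powr (-q) \<le> 2 powr q * D powr (-q) * B powr (-p)"
      using A_pow by (metis mult_mono powr_ge_zero mult_nonneg_nonneg)
    then show ?thesis
      by (simp add: distrib_left add_increasing)
  qed
  then show ?thesis
    unfolding A_def B_def D_def .
qed

lemma nn_integral_jbr_powr_mult_le:
  assumes "1 < p" "0 \<le> q" "q \<le> p"
  shows "(\<integral>\<^sup>+x. ennreal (jbr (x - \<alpha>) powr (-p) * jbr (x - \<beta>) powr (-q)) \<partial>lborel)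
      \<le> ennreal (2 powr q * jbr (\<alpha> - \<beta>) powr (-q)) * (2 * jbr_integral p)"
proof -
  let ?c = "2 powr q * jbr (\<alpha> - \<beta>) powr (-q)"
  have "(\<integral>\<^sup>+x. ennreal (jbr (x - \<alpha>) powr (-p) * jbr (x - \<beta>) powr (-q)) \<partial>lborel)
     \<le> (\<integral>\<^sup>+x. ennreal ?c * ennreal (jbr (x - \<alpha>) powr (-p)) + ennreal ?c * ennreal (jbr (x - \<beta>) powr (-p)) \<partial>lborel)"
    using jbr_powr_mult_le[OF assms(2,3)]
    by (intro nn_integral_mono) (simp add: ennreal_mult'[symmetric] ennreal_plus[symmetric] distrib_left del: ennreal_plus)
  also have "\<dots> = ennreal ?c * jbr_integral p + ennreal ?c * jbr_integral p"
    by (simp add: nn_integral_add nn_integral_cmult jbr_integral_shift)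
  finally show ?thesis
    by (simp add: mult_2 distrib_left)
qed

lemma indicator_jbr_powr_le:
  assumes "0 \<le> e" "e \<le> p" "1 \<le> p" "0 \<le> N"
  shows "indicator {-N..N} \<mu> * jbr x powr (-e)
    \<le> (1 + N) powr (p - e) * (jbr x powr (-p) + indicator {-N..N} \<mu> / (1 + N))"
proof (cases "jbr x \<le> 1 + N")
  case True
  have "jbr x powr (-e) = jbr x powr (p - e) * jbr x powr (-p)"
    by (simp add: powr_add[symmetric])
  also have "\<dots> \<le> (1 + N) powr (p - e) * jbr x powr (-p)"
    using True assms by (intro mult_right_mono powr_mono2) auto
  finally show ?thesis
    using assms by (auto simp: indicator_def distrib_left intro: order_trans)
next
  case False
  have "jbr x powr (-e) \<le> (1 + N) powr (-e)"
    using False assms by (intro powr_mono2') auto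
  also have "\<dots> = (1 + N) powr (p - e) * (1 + N) powr (-p)"
    by (simp add: powr_add[symmetric])
  also have "\<dots> \<le> (1 + N) powr (p - e) * (1 / (1 + N))"
    using assms powr_mono[of "-p" "-1" "1 + N"] by (intro mult_left_mono) (auto simp: powr_minus_divide)
  finally show ?thesis
    using assms by (auto simp: indicator_def distrib_left intro: add_increasing)
qed

lemma nn_integral_interval_jbr_powr_le:
  assumes "0 \<le> e" "e \<le> 1" "1 < p" "0 \<le> N"
  shows "(\<integral>\<^sup>+\<mu>. ennreal (indicator {-N..N} \<mu> * jbr (c - \<mu>) powr (-e)) \<partial>lborel)
     \<le> ennreal ((1 + N) powr (p - e)) * (jbr_integral p + 2)"
proof -
  have "(\<integral>\<^sup>+\<mu>. ennreal (indicator {-N..N} \<mu> * jbr (c - \<mu>) powr (-e)) \<partial>lborel)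
      \<le> (\<integral>\<^sup>+\<mu>. ennreal ((1 + N) powr (p - e))
          * (ennreal (jbr (\<mu> - c) powr (-p)) + ennreal (1 / (1 + N)) * indicator {-N..N} \<mu>) \<partial>lborel)"
  proof (rule nn_integral_mono)
    fix \<mu>
    have "indicator {-N..N} \<mu> * jbr (c - \<mu>) powr (-e)
        \<le> (1 + N) powr (p - e) * (jbr (\<mu> - c) powr (-p) + indicator {-N..N} \<mu> / (1 + N))"
      using indicator_jbr_powr_le[of e p N \<mu> "\<mu> - c"] assms by (simp add: jbr_minus_commute)
    then show "ennreal (indicator {-N..N} \<mu> * jbr (c - \<mu>) powr (-e))
        \<le> ennreal ((1 + N) powr (p - e)) * (ennreal (jbr (\<mu> - c) powr (-p)) + ennreal (1 / (1 + N)) * indicator {-N..N} \<mu>)"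
      using assms by (cases "\<mu> \<in> {-N..N}")
        (simp_all add: ennreal_mult[symmetric] ennreal_plus[symmetric] del: ennreal_plus)
  qed
  also have "\<dots> = ennreal ((1 + N) powr (p - e)) * (jbr_integral p + ennreal (2 * N / (1 + N)))"
    using assms by (simp add: nn_integral_add nn_integral_cmult jbr_integral_shift ennreal_mult[symmetric])
  also have "\<dots> \<le> ennreal ((1 + N) powr (p - e)) * (jbr_integral p + ennreal 2)"
    using assms by (intro mult_left_mono add_left_mono ennreal_leI) (auto simp: divide_le_eq)
  finally show ?thesis
    by simp
qed

lemma nn_integral_interval_scale:
  fixes h :: "real \<Rightarrow> real"
  assumes "y \<noteq> 0" and [measurable]: "h \<in> borel_measurable borel"
  shows "ennreal \<bar>y\<bar> * (\<integral>\<^sup>+x. ennreal (indicator {-1..1} x * h (x * y)) \<partial>lborel)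
    = (\<integral>\<^sup>+\<mu>. ennreal (indicator {-\<bar>y\<bar>..\<bar>y\<bar>} \<mu> * h \<mu>) \<partial>lborel)"
proof -
  have "y * x \<in> {-\<bar>y\<bar>..\<bar>y\<bar>} \<longleftrightarrow> x \<in> {-1..1}" for x
  proof -
    have "y * x \<in> {-\<bar>y\<bar>..\<bar>y\<bar>} \<longleftrightarrow> \<bar>y\<bar> * \<bar>x\<bar> \<le> \<bar>y\<bar> * 1"
      by (auto simp: abs_mult[symmetric] abs_le_iff)
    also have "\<dots> \<longleftrightarrow> x \<in> {-1..1}"
      using assms by (auto simp: abs_le_iff)
    finally show ?thesis .
  qed
  then show ?thesis
    using nn_integral_real_affine[of "\<lambda>\<mu>. ennreal (indicator {-\<bar>y\<bar>..\<bar>y\<bar>} \<mu> * h \<mu>)" y 0] assms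
    by (simp add: indicator_def mult.commute)
qed

lemma nn_integral_jbr_powr_linear_le:
  assumes "0 \<le> e" "e \<le> 1" "1 < p"
  shows "(\<integral>\<^sup>+x. ennreal (indicator {-1..1} x * jbr (c - x * y) powr (-e)) \<partial>lborel)
     \<le> ennreal (2 * jbr y powr (p - 1 - e)) * (jbr_integral p + 2)"
proof (cases "\<bar>y\<bar> \<le> 1")
  case True
  have "(\<integral>\<^sup>+x. ennreal (indicator {-1..1} x * jbr (c - x * y) powr (-e)) \<partial>lborel)
      \<le> (\<integral>\<^sup>+x. indicator {-1..1::real} x \<partial>lborel)"
    by (intro nn_integral_mono) (use assms jbr_powr_le_1[of "-e"] in \<open>auto simp: indicator_def\<close>)
  also have "\<dots> = ennreal 2"
    by simp
  also have "\<dots> \<le> ennreal (2 * jbr y powr (p - 1 - e) * 2)"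
  proof (intro ennreal_leI)
    have "1 / 2 \<le> jbr y powr (-1)"
      using True by (simp add: powr_minus_divide field_simps jbr_def)
    also have "\<dots> \<le> jbr y powr (p - 1 - e)"
      using assms by (intro powr_mono) auto
    finally show "2 \<le> 2 * jbr y powr (p - 1 - e) * 2"
      by simp
  qed
  also have "\<dots> \<le> ennreal (2 * jbr y powr (p - 1 - e)) * (jbr_integral p + 2)"
    by (subst ennreal_mult) (auto intro: mult_left_mono)
  finally show ?thesis .
next
  case False
  define N where "N = \<bar>y\<bar>"
  then have N: "1 < N" "y \<noteq> 0"
    using False by auto
  have "ennreal N * (\<integral>\<^sup>+x. ennreal (indicator {-1..1} x * jbr (c - x * y) powr (-e)) \<partial>lborel)
      = (\<integral>\<^sup>+\<mu>. ennreal (indicator {-N..N} \<mu> * jbr (c - \<mu>) powr (-e)) \<partial>lborel)"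
    unfolding N_def using nn_integral_interval_scale[OF N(2), of "\<lambda>\<mu>. jbr (c - \<mu>) powr (-e)"] by simp
  also have "\<dots> \<le> ennreal ((1 + N) powr (p - e)) * (jbr_integral p + 2)"
    using assms N by (intro nn_integral_interval_jbr_powr_le) auto
  also have "\<dots> \<le> ennreal N * (ennreal (2 * jbr y powr (p - 1 - e)) * (jbr_integral p + 2))"
  proof -
    have "(1 + N) powr (p - e) = (1 + N) powr (p - 1 - e) * (1 + N)"
      using N powr_add[of "1 + N" "p - 1 - e" 1] by simp
    also have "\<dots> \<le> N * (2 * jbr y powr (p - 1 - e))"
      using N by (simp add: N_def jbr_def mult_left_mono mult.commute mult.left_commute)
    finally show ?thesis
      using N by (simp add: mult.assoc[symmetric] ennreal_mult'[symmetric] mult_right_mono)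
  qed
  finally show ?thesis
    using N by (subst (asm) ennreal_mult_le_mult_iff) auto
qed

section \<open>Weighted bilinear estimates\<close>

lemma sum_square_le_3: "((x::ennreal) + y + z)\<^sup>2 \<le> 3 * (x\<^sup>2 + y\<^sup>2 + z\<^sup>2)"
proof (cases "x = \<infinity> \<or> y = \<infinity> \<or> z = \<infinity>")
  case True
  then have "3 * (x\<^sup>2 + y\<^sup>2 + z\<^sup>2) = \<infinity>"
    by (auto simp: power2_eq_square ennreal_mult_eq_top_iff)
  then show ?thesis
    by (metis infinity_ennreal_def top_greatest)
next
  case False
  obtain a b c where abc: "x = ennreal a" "y = ennreal b" "z = ennreal c" "0 \<le> a" "0 \<le> b" "0 \<le> c"
    using False by (cases x rule: ennreal_cases; cases y rule: ennreal_cases; cases z rule: ennreal_cases) auto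
  have "(a + b + c)\<^sup>2 + ((a - b)\<^sup>2 + (b - c)\<^sup>2 + (a - c)\<^sup>2) = 3 * (a\<^sup>2 + b\<^sup>2 + c\<^sup>2)"
    by (simp add: power2_eq_square algebra_simps)
  then have "(a + b + c)\<^sup>2 \<le> 3 * (a\<^sup>2 + b\<^sup>2 + c\<^sup>2)"
    by (metis le_add_same_cancel1 add_nonneg_nonneg zero_le_power2)
  have "(x + y + z)\<^sup>2 = ennreal ((a + b + c)\<^sup>2)"
    using abc by (simp add: ennreal_power ennreal_plus[symmetric] del: ennreal_plus)
  also have "\<dots> \<le> ennreal (3 * (a\<^sup>2 + b\<^sup>2 + c\<^sup>2))"
    using \<open>(a + b + c)\<^sup>2 \<le> 3 * (a\<^sup>2 + b\<^sup>2 + c\<^sup>2)\<close> by (rule ennreal_leI)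
  also have "\<dots> = 3 * (x\<^sup>2 + y\<^sup>2 + z\<^sup>2)"
    using abc by (simp add: ennreal_mult ennreal_power)
  finally show ?thesis .
qed

lemma nn_integral_lborel_translate:
  fixes h :: "'a::euclidean_space \<Rightarrow> ennreal"
  assumes [measurable]: "h \<in> borel_measurable borel"
  shows "(\<integral>\<^sup>+q. h q \<partial>lborel) = (\<integral>\<^sup>+r. h (p + r) \<partial>lborel)"
proof -
  have "(\<integral>\<^sup>+q. h q \<partial>lborel) = (\<integral>\<^sup>+q. h q \<partial>(distr lborel borel ((+) p)))"
    by (simp add: lborel_distr_plus)
  also have "\<dots> = (\<integral>\<^sup>+r. h (p + r) \<partial>lborel)"
    by (subst nn_integral_distr) auto
  finally show ?thesis .
qed

lemma weighted_bilinear_bound_uniform_output: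
  fixes f g w :: "'a::euclidean_space \<Rightarrow> ennreal" and K :: "'a \<Rightarrow> 'a \<Rightarrow> ennreal"
  assumes [measurable]: "f \<in> borel_measurable borel" "g \<in> borel_measurable borel"
    "case_prod K \<in> borel_measurable (lborel \<Otimes>\<^sub>M lborel)"
    and bound: "\<And>p. w p * (\<integral>\<^sup>+q. (K p q)\<^sup>2 \<partial>lborel) \<le> C"
  shows "(\<integral>\<^sup>+p. w p * (\<integral>\<^sup>+q. f q * g (q - p) * K p q \<partial>lborel)\<^sup>2 \<partial>lborel)
    \<le> C * ((\<integral>\<^sup>+q. (f q)\<^sup>2 \<partial>lborel) * (\<integral>\<^sup>+q. (g q)\<^sup>2 \<partial>lborel))"
proof -
  have translate_f: "(\<integral>\<^sup>+p. (f (p + r))\<^sup>2 \<partial>lborel) = (\<integral>\<^sup>+q. (f q)\<^sup>2 \<partial>lborel)" for r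
    using nn_integral_lborel_translate[of "\<lambda>q. (f q)\<^sup>2" r] by (simp add: add.commute)
  have pointwise: "w p * (\<integral>\<^sup>+q. f q * g (q - p) * K p q \<partial>lborel)\<^sup>2
      \<le> C * (\<integral>\<^sup>+r. (f (p + r) * g r)\<^sup>2 \<partial>lborel)" for p
  proof -
    have "(\<integral>\<^sup>+q. f q * g (q - p) * K p q \<partial>lborel)\<^sup>2
        \<le> (\<integral>\<^sup>+q. (f q * g (q - p))\<^sup>2 \<partial>lborel) * (\<integral>\<^sup>+q. (K p q)\<^sup>2 \<partial>lborel)"
      by (rule Cauchy_Schwarz_nn_integral) measurable
    also have "(\<integral>\<^sup>+q. (f q * g (q - p))\<^sup>2 \<partial>lborel) = (\<integral>\<^sup>+r. (f (p + r) * g r)\<^sup>2 \<partial>lborel)"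
      by (subst nn_integral_lborel_translate[where p = p]) simp_all
    finally have "w p * (\<integral>\<^sup>+q. f q * g (q - p) * K p q \<partial>lborel)\<^sup>2
        \<le> (\<integral>\<^sup>+r. (f (p + r) * g r)\<^sup>2 \<partial>lborel) * (w p * (\<integral>\<^sup>+q. (K p q)\<^sup>2 \<partial>lborel))"
      by (simp add: mult_left_mono mult_ac)
    also have "\<dots> \<le> (\<integral>\<^sup>+r. (f (p + r) * g r)\<^sup>2 \<partial>lborel) * C"
      by (intro mult_left_mono bound) simp
    finally show ?thesis
      by (simp add: mult.commute)
  qed
  have "(\<integral>\<^sup>+p. w p * (\<integral>\<^sup>+q. f q * g (q - p) * K p q \<partial>lborel)\<^sup>2 \<partial>lborel)
      \<le> C * (\<integral>\<^sup>+p. (\<integral>\<^sup>+r. (f (p + r) * g r)\<^sup>2 \<partial>lborel) \<partial>lborel)"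
    using pointwise by (subst nn_integral_cmult[symmetric]) (measurable, intro nn_integral_mono)
  also have "(\<integral>\<^sup>+p. (\<integral>\<^sup>+r. (f (p + r) * g r)\<^sup>2 \<partial>lborel) \<partial>lborel)
      = (\<integral>\<^sup>+r. (\<integral>\<^sup>+p. (g r)\<^sup>2 * (f (p + r))\<^sup>2 \<partial>lborel) \<partial>lborel)"
    by (subst lborel_pair.Fubini') (simp_all add: power_mult_distrib mult.commute)
  also have "\<dots> = (\<integral>\<^sup>+r. (g r)\<^sup>2 * (\<integral>\<^sup>+p. (f (p + r))\<^sup>2 \<partial>lborel) \<partial>lborel)"
    by (intro nn_integral_cong nn_integral_cmult) measurable
  also have "\<dots> = (\<integral>\<^sup>+r. (g r)\<^sup>2 * (\<integral>\<^sup>+q. (f q)\<^sup>2 \<partial>lborel) \<partial>lborel)"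
    using translate_f by simp
  finally show ?thesis
    by (simp add: nn_integral_multc mult_ac)
qed

lemma weighted_bilinear_bound_uniform_input_general:
  fixes f w :: "'a::euclidean_space \<Rightarrow> ennreal" and h K :: "'a \<Rightarrow> 'a \<Rightarrow> ennreal"
  assumes [measurable]: "f \<in> borel_measurable borel" "w \<in> borel_measurable borel"
    "case_prod h \<in> borel_measurable (lborel \<Otimes>\<^sub>M lborel)"
    "case_prod K \<in> borel_measurable (lborel \<Otimes>\<^sub>M lborel)"
    and h_bound: "\<And>p. (\<integral>\<^sup>+q. (h p q)\<^sup>2 \<partial>lborel) \<le> H"
    and K_bound: "\<And>q. (\<integral>\<^sup>+p. w p * (K p q)\<^sup>2 \<partial>lborel) \<le> C"
  shows "(\<integral>\<^sup>+p. w p * (\<integral>\<^sup>+q. f q * h p q * K p q \<partial>lborel)\<^sup>2 \<partial>lborel)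
    \<le> C * ((\<integral>\<^sup>+q. (f q)\<^sup>2 \<partial>lborel) * H)"
proof -
  have f_sq_measurable: "(\<lambda>q. (f q)\<^sup>2) \<in> borel_measurable lborel"
    by measurable
  have pointwise: "w p * (\<integral>\<^sup>+q. f q * h p q * K p q \<partial>lborel)\<^sup>2
      \<le> H * (\<integral>\<^sup>+q. (f q)\<^sup>2 * (w p * (K p q)\<^sup>2) \<partial>lborel)" for p
  proof -
    have "(\<integral>\<^sup>+q. f q * h p q * K p q \<partial>lborel) = (\<integral>\<^sup>+q. (f q * K p q) * h p q \<partial>lborel)"
      by (simp add: mult_ac)
    also have "\<dots>\<^sup>2 \<le> (\<integral>\<^sup>+q. (f q * K p q)\<^sup>2 \<partial>lborel) * (\<integral>\<^sup>+q. (h p q)\<^sup>2 \<partial>lborel)"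
      by (rule Cauchy_Schwarz_nn_integral) measurable
    also have "\<dots> \<le> (\<integral>\<^sup>+q. (f q * K p q)\<^sup>2 \<partial>lborel) * H"
      by (intro mult_left_mono h_bound) simp
    finally have "w p * (\<integral>\<^sup>+q. f q * h p q * K p q \<partial>lborel)\<^sup>2
        \<le> w p * ((\<integral>\<^sup>+q. (f q * K p q)\<^sup>2 \<partial>lborel) * H)"
      by (rule mult_left_mono) simp
    also have "\<dots> = H * (\<integral>\<^sup>+q. w p * (f q * K p q)\<^sup>2 \<partial>lborel)"
      by (subst nn_integral_cmult) (measurable, simp add: mult_ac)
    finally show ?thesis
      by (simp add: power_mult_distrib mult_ac)
  qed
  have "(\<integral>\<^sup>+p. w p * (\<integral>\<^sup>+q. f q * h p q * K p q \<partial>lborel)\<^sup>2 \<partial>lborel)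
      \<le> H * (\<integral>\<^sup>+p. (\<integral>\<^sup>+q. (f q)\<^sup>2 * (w p * (K p q)\<^sup>2) \<partial>lborel) \<partial>lborel)"
    using pointwise by (subst nn_integral_cmult[symmetric]) (measurable, intro nn_integral_mono)
  also have "\<dots> = H * (\<integral>\<^sup>+q. (f q)\<^sup>2 * (\<integral>\<^sup>+p. w p * (K p q)\<^sup>2 \<partial>lborel) \<partial>lborel)"
    by (subst lborel_pair.Fubini') (simp_all add: nn_integral_cmult)
  also have "\<dots> \<le> H * (\<integral>\<^sup>+q. (f q)\<^sup>2 * C \<partial>lborel)"
    by (intro mult_left_mono nn_integral_mono K_bound) simp_all
  also have "\<dots> = H * ((\<integral>\<^sup>+q. (f q)\<^sup>2 \<partial>lborel) * C)"
    using nn_integral_multc[OF f_sq_measurable, of C] by simp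
  finally show ?thesis
    by (simp add: mult_ac)
qed

lemma weighted_bilinear_bound_uniform_input:
  fixes f g w :: "'a::euclidean_space \<Rightarrow> ennreal" and K :: "'a \<Rightarrow> 'a \<Rightarrow> ennreal"
  assumes [measurable]: "f \<in> borel_measurable borel" "g \<in> borel_measurable borel"
    "w \<in> borel_measurable borel" "case_prod K \<in> borel_measurable (lborel \<Otimes>\<^sub>M lborel)"
    and bound: "\<And>q. (\<integral>\<^sup>+p. w p * (K p q)\<^sup>2 \<partial>lborel) \<le> C"
  shows "(\<integral>\<^sup>+p. w p * (\<integral>\<^sup>+q. f q * g (q - p) * K p q \<partial>lborel)\<^sup>2 \<partial>lborel)
    \<le> C * ((\<integral>\<^sup>+q. (f q)\<^sup>2 \<partial>lborel) * (\<integral>\<^sup>+q. (g q)\<^sup>2 \<partial>lborel))"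
proof (rule weighted_bilinear_bound_uniform_input_general[OF _ _ _ _ _ bound])
  show "(\<integral>\<^sup>+q. (g (q - p))\<^sup>2 \<partial>lborel) \<le> (\<integral>\<^sup>+q. (g q)\<^sup>2 \<partial>lborel)" for p
    by (subst nn_integral_lborel_translate[where p = p]) simp_all
qed measurable

lemma weighted_bilinear_bound_uniform_difference:
  fixes f g w :: "'a::euclidean_space \<Rightarrow> ennreal" and K :: "'a \<Rightarrow> 'a \<Rightarrow> ennreal"
  assumes [measurable]: "f \<in> borel_measurable borel" "g \<in> borel_measurable borel"
    "w \<in> borel_measurable borel" "case_prod K \<in> borel_measurable (lborel \<Otimes>\<^sub>M lborel)"
    and bound: "\<And>r. (\<integral>\<^sup>+p. w p * (K p (p + r))\<^sup>2 \<partial>lborel) \<le> C"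
  shows "(\<integral>\<^sup>+p. w p * (\<integral>\<^sup>+q. f q * g (q - p) * K p q \<partial>lborel)\<^sup>2 \<partial>lborel)
    \<le> C * ((\<integral>\<^sup>+q. (f q)\<^sup>2 \<partial>lborel) * (\<integral>\<^sup>+q. (g q)\<^sup>2 \<partial>lborel))"
proof -
  \<comment> \<open>the substitution q = p + r exchanges the roles of f and g\<close>
  have "(\<integral>\<^sup>+q. f q * g (q - p) * K p q \<partial>lborel) = (\<integral>\<^sup>+r. g r * f (p + r) * K p (p + r) \<partial>lborel)" for p
    by (subst nn_integral_lborel_translate[where p = p]) (simp_all add: mult_ac)
  then have "(\<integral>\<^sup>+p. w p * (\<integral>\<^sup>+q. f q * g (q - p) * K p q \<partial>lborel)\<^sup>2 \<partial>lborel)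
      = (\<integral>\<^sup>+p. w p * (\<integral>\<^sup>+r. g r * f (p + r) * K p (p + r) \<partial>lborel)\<^sup>2 \<partial>lborel)"
    by simp
  also have "\<dots> \<le> C * ((\<integral>\<^sup>+r. (g r)\<^sup>2 \<partial>lborel) * (\<integral>\<^sup>+q. (f q)\<^sup>2 \<partial>lborel))"
  proof (rule weighted_bilinear_bound_uniform_input_general[OF _ _ _ _ _ bound])
    show "(\<integral>\<^sup>+r. (f (p + r))\<^sup>2 \<partial>lborel) \<le> (\<integral>\<^sup>+q. (f q)\<^sup>2 \<partial>lborel)" for p
      using nn_integral_lborel_translate[of "\<lambda>q. (f q)\<^sup>2" p] by simp
  qed measurable
  finally show ?thesis
    by (simp add: mult_ac)
qed

lemma nn_integral_weighted_square_le_sum3: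
  fixes w F FA FB FC :: "'a::euclidean_space \<Rightarrow> ennreal"
  assumes [measurable]: "w \<in> borel_measurable borel" "FA \<in> borel_measurable borel"
    "FB \<in> borel_measurable borel" "FC \<in> borel_measurable borel"
    and "\<And>p. F p \<le> FA p + FB p + FC p"
  shows "(\<integral>\<^sup>+p. w p * (F p)\<^sup>2 \<partial>lborel)
    \<le> 3 * ((\<integral>\<^sup>+p. w p * (FA p)\<^sup>2 \<partial>lborel) + (\<integral>\<^sup>+p. w p * (FB p)\<^sup>2 \<partial>lborel) + (\<integral>\<^sup>+p. w p * (FC p)\<^sup>2 \<partial>lborel))"
proof -
  have "w p * (F p)\<^sup>2 \<le> 3 * (w p * (FA p)\<^sup>2) + 3 * (w p * (FB p)\<^sup>2) + 3 * (w p * (FC p)\<^sup>2)" for p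
  proof -
    have "(F p)\<^sup>2 \<le> 3 * ((FA p)\<^sup>2 + (FB p)\<^sup>2 + (FC p)\<^sup>2)"
      using power_mono[OF assms(5)[of p] zero_le, where n = 2] sum_square_le_3 by (blast intro: order_trans)
    then have "w p * (F p)\<^sup>2 \<le> w p * (3 * ((FA p)\<^sup>2 + (FB p)\<^sup>2 + (FC p)\<^sup>2))"
      by (rule mult_left_mono) simp
    then show ?thesis
      by (simp add: distrib_left mult_ac)
  qed
  then have "(\<integral>\<^sup>+p. w p * (F p)\<^sup>2 \<partial>lborel)
      \<le> (\<integral>\<^sup>+p. 3 * (w p * (FA p)\<^sup>2) + 3 * (w p * (FB p)\<^sup>2) + 3 * (w p * (FC p)\<^sup>2) \<partial>lborel)"
    by (intro nn_integral_mono)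
  also have "\<dots> = 3 * ((\<integral>\<^sup>+p. w p * (FA p)\<^sup>2 \<partial>lborel) + (\<integral>\<^sup>+p. w p * (FB p)\<^sup>2 \<partial>lborel)
      + (\<integral>\<^sup>+p. w p * (FC p)\<^sup>2 \<partial>lborel))"
    by (simp add: nn_integral_add nn_integral_cmult distrib_left)
  finally show ?thesis .
qed

lemma weighted_bilinear_bound_split3:
  fixes f g w :: "'a::euclidean_space \<Rightarrow> ennreal" and K KA KB KC :: "'a \<Rightarrow> 'a \<Rightarrow> ennreal"
  assumes mf [measurable]: "f \<in> borel_measurable borel" and mg [measurable]: "g \<in> borel_measurable borel"
    and mw [measurable]: "w \<in> borel_measurable borel"
    and mKA [measurable]: "case_prod KA \<in> borel_measurable (lborel \<Otimes>\<^sub>M lborel)"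
    and mKB [measurable]: "case_prod KB \<in> borel_measurable (lborel \<Otimes>\<^sub>M lborel)"
    and mKC [measurable]: "case_prod KC \<in> borel_measurable (lborel \<Otimes>\<^sub>M lborel)"
    and split: "\<And>p q. K p q \<le> KA p q + KB p q + KC p q"
    and A: "\<And>p. w p * (\<integral>\<^sup>+q. (KA p q)\<^sup>2 \<partial>lborel) \<le> CA"
    and B: "\<And>q. (\<integral>\<^sup>+p. w p * (KB p q)\<^sup>2 \<partial>lborel) \<le> CB"
    and C: "\<And>r. (\<integral>\<^sup>+p. w p * (KC p (p + r))\<^sup>2 \<partial>lborel) \<le> CC"
  shows "(\<integral>\<^sup>+p. w p * (\<integral>\<^sup>+q. f q * g (q - p) * K p q \<partial>lborel)\<^sup>2 \<partial>lborel)
    \<le> 3 * (CA + CB + CC) * ((\<integral>\<^sup>+q. (f q)\<^sup>2 \<partial>lborel) * (\<integral>\<^sup>+q. (g q)\<^sup>2 \<partial>lborel))"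
proof -
  define F where "F L p = (\<integral>\<^sup>+q. f q * g (q - p) * L p q \<partial>lborel)" for L p
  define N where "N = (\<integral>\<^sup>+q. (f q)\<^sup>2 \<partial>lborel) * (\<integral>\<^sup>+q. (g q)\<^sup>2 \<partial>lborel)"
  have [measurable]: "F KA \<in> borel_measurable lborel"
    unfolding F_def by measurable
  have [measurable]: "F KB \<in> borel_measurable lborel"
    unfolding F_def by measurable
  have [measurable]: "F KC \<in> borel_measurable lborel"
    unfolding F_def by measurable
  have "F K p \<le> F KA p + F KB p + F KC p" for p
  proof -
    have "F K p \<le> (\<integral>\<^sup>+q. f q * g (q - p) * KA p q + f q * g (q - p) * KB p q + f q * g (q - p) * KC p q \<partial>lborel)"
      unfolding F_def using split by (intro nn_integral_mono) (simp add: mult_left_mono flip: distrib_left)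
    also have "\<dots> = F KA p + F KB p + F KC p"
      unfolding F_def by (simp add: nn_integral_add)
    finally show ?thesis .
  qed
  then have "(\<integral>\<^sup>+p. w p * (F K p)\<^sup>2 \<partial>lborel)
      \<le> 3 * ((\<integral>\<^sup>+p. w p * (F KA p)\<^sup>2 \<partial>lborel) + (\<integral>\<^sup>+p. w p * (F KB p)\<^sup>2 \<partial>lborel)
        + (\<integral>\<^sup>+p. w p * (F KC p)\<^sup>2 \<partial>lborel))"
    by (intro nn_integral_weighted_square_le_sum3) simp_all
  also have "\<dots> \<le> 3 * (CA * N + CB * N + CC * N)"
    unfolding F_def N_def
    using weighted_bilinear_bound_uniform_output[OF mf mg mKA A]
      weighted_bilinear_bound_uniform_input[OF mf mg mw mKB B]
      weighted_bilinear_bound_uniform_difference[OF mf mg mw mKC C]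
    by (intro mult_left_mono add_mono) simp_all
  finally show ?thesis
    unfolding F_def N_def by (simp add: distrib_right mult.assoc)
qed

section \<open>Modulations and resonance\<close>

(* For the output
   frequency p and the input frequencies q, q - p the three modulations are <\<tau>>,
   modulation q and modulation (q - p). *)
definition modulation :: "real \<times> real \<Rightarrow> real" where
  "modulation q = jbr (snd q + (fst q)\<^sup>2 / 2)"

definition resonance :: "real \<Rightarrow> real \<Rightarrow> real" where
  "resonance \<xi> \<xi>\<^sub>1 = \<xi> * \<xi>\<^sub>1 - \<xi>\<^sup>2 / 2"

lemma modulation_pos [simp]: "0 < modulation q"
  by (simp add: modulation_def)

lemma modulation_ge_1 [simp]: "1 \<le> modulation q"
  by (simp add: modulation_def)

lemma modulation_neq_0 [simp]: "modulation q \<noteq> 0"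
  by (simp add: modulation_def)

lemma jbr_resonance_le_max:
  "jbr (resonance (fst p) (fst q)) \<le> 3 * max (jbr (snd p)) (max (modulation q) (modulation (q - p)))"
proof -
  obtain x t x1 t1 where pq: "p = (x, t)" "q = (x1, t1)"
    by (cases p, cases q)
  have "resonance x x1 = (t1 + x1\<^sup>2 / 2) - (t1 - t + (x1 - x)\<^sup>2 / 2) - t"
    by (simp add: resonance_def power2_eq_square field_simps)
  then have "\<bar>resonance x x1\<bar> \<le> \<bar>t\<bar> + \<bar>t1 + x1\<^sup>2 / 2\<bar> + \<bar>t1 - t + (x1 - x)\<^sup>2 / 2\<bar>"
    by linarith
  then show ?thesis
    unfolding pq modulation_def jbr_def by (simp add: max_def)
qed

definition frequency_exponent :: "real \<Rightarrow> real" where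
  "frequency_exponent k = (if 0 \<le> k then -2 * k else -4 * k)"

lemma frequency_factor_le_nonneg:
  assumes "0 \<le> k"
  shows "jbr x1 powr (-2*k) * jbr (x1 - x) powr (-2*k) \<le> jbr x powr (-2*k)"
proof -
  have "jbr x \<le> jbr x1 * jbr (x1 - x)"
    by (rule jbr_le_mult) linarith
  then have "(jbr x1 * jbr (x1 - x)) powr (-2*k) \<le> jbr x powr (-2*k)"
    using assms by (intro powr_mono2') auto
  then show ?thesis
    by (simp add: powr_mult)
qed

lemma frequency_factor_le_resonance:
  assumes "1 \<le> \<bar>x\<bar>" "0 \<le> 2*a + 4*k" "0 \<le> a"
  shows "jbr x1 powr (-2*k) * jbr (x1 - x) powr (-2*k) * jbr (resonance x x1) powr (-2*a)
    \<le> jbr x powr (frequency_exponent k)"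
proof (cases "0 \<le> k")
  case True
  have "jbr x1 powr (-2*k) * jbr (x1 - x) powr (-2*k) * jbr (resonance x x1) powr (-2*a)
      \<le> jbr x powr (-2*k) * 1"
    using frequency_factor_le_nonneg[OF True] jbr_powr_le_1[of "-2*a"] assms
    by (intro mult_mono) auto
  then show ?thesis
    using True by (simp add: frequency_exponent_def)
next
  case False
  define R where "R = resonance x x1"
  have "x \<noteq> 0"
    using assms by auto
  then have x1: "x1 = R / x + x / 2" and x1x: "x1 - x = R / x - x / 2"
    unfolding R_def resonance_def by (simp_all add: field_simps power2_eq_square)
  have "\<bar>R\<bar> / \<bar>x\<bar> \<le> \<bar>R\<bar> / 1"
    using assms by (intro divide_left_mono) auto
  then have "\<bar>R / x\<bar> \<le> \<bar>R\<bar>"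
    by (simp add: abs_divide)
  then have "jbr x1 \<le> jbr R * jbr x" "jbr (x1 - x) \<le> jbr R * jbr x"
    unfolding x1 x1x by (intro jbr_le_mult; linarith)+
  then have "jbr x1 powr (-2*k) * jbr (x1 - x) powr (-2*k) \<le> (jbr R * jbr x) powr (-2*k) * (jbr R * jbr x) powr (-2*k)"
    using False by (intro mult_mono powr_mono2) auto
  also have "\<dots> = jbr R powr (-4*k) * jbr x powr (-4*k)"
    by (simp add: powr_mult powr_add[symmetric] mult_ac)
  finally have "jbr x1 powr (-2*k) * jbr (x1 - x) powr (-2*k) * jbr R powr (-2*a)
      \<le> jbr R powr (-4*k) * jbr x powr (-4*k) * jbr R powr (-2*a)"
    by (rule mult_right_mono) simp
  also have "\<dots> = jbr R powr (-4*k + -2*a) * jbr x powr (-4*k)"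
    by (simp only: powr_add mult_ac)
  also have "\<dots> \<le> 1 * jbr x powr (-4*k)"
    using assms by (intro mult_right_mono jbr_powr_le_1) auto
  finally show ?thesis
    using False unfolding R_def frequency_exponent_def by simp
qed

lemma frequency_factor_le_of_comparable:
  assumes "\<bar>x1\<bar> \<le> 3 * \<bar>x\<bar>"
  shows "jbr x1 powr (-2*k) * jbr (x1 - x) powr (-2*k) \<le> 12 powr (2*\<bar>k\<bar>) * jbr x powr (frequency_exponent k)"
proof (cases "0 \<le> k")
  case True
  have "jbr x1 powr (-2*k) * jbr (x1 - x) powr (-2*k) \<le> jbr x powr (-2*k)"
    by (rule frequency_factor_le_nonneg[OF True])
  also have "\<dots> \<le> 12 powr (2*\<bar>k\<bar>) * jbr x powr (-2*k)"
    using ge_one_powr_ge_zero[of 12 "2*\<bar>k\<bar>"] by (simp add: mult_le_cancel_right1)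
  finally show ?thesis
    using True by (simp add: frequency_exponent_def)
next
  case False
  have "jbr x1 \<le> 3 * jbr x" "jbr (x1 - x) \<le> 4 * jbr x"
    using assms abs_triangle_ineq4[of x1 x] unfolding jbr_def by auto
  then have "jbr x1 * jbr (x1 - x) \<le> 12 * (jbr x * jbr x)"
    using mult_mono[of "jbr x1" "3 * jbr x" "jbr (x1 - x)" "4 * jbr x"] by simp
  then have "(jbr x1 * jbr (x1 - x)) powr (-2*k) \<le> (12 * (jbr x * jbr x)) powr (-2*k)"
    using False by (intro powr_mono2) auto
  then show ?thesis
    using False by (simp add: frequency_exponent_def powr_mult powr_add[symmetric])
qed

lemma mult_powr_minus_le_of_le_max:
  fixes R M M' \<beta> :: real
  assumes "0 < R" "0 < M" "0 < M'" "0 \<le> \<beta>" "R \<le> 3 * max M M'"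
  shows "M powr (-\<beta>) * M' powr (-\<beta>) \<le> 3 powr \<beta> * R powr (-\<beta>) * (M powr (-\<beta>) + M' powr (-\<beta>))"
proof (cases "M' \<le> M")
  case True
  then have "M powr (-\<beta>) \<le> 3 powr \<beta> * R powr (-\<beta>)"
    using assms by (intro powr_minus_le_of_le_mult) (auto simp: max_def)
  then have "M powr (-\<beta>) * M' powr (-\<beta>) \<le> 3 powr \<beta> * R powr (-\<beta>) * M' powr (-\<beta>)"
    by (rule mult_right_mono) simp
  then show ?thesis
    by (simp add: distrib_left add_increasing)
next
  case False
  then have "M' powr (-\<beta>) \<le> 3 powr \<beta> * R powr (-\<beta>)"
    using assms by (intro powr_minus_le_of_le_mult) (auto simp: max_def)
  then have "M powr (-\<beta>) * M' powr (-\<beta>) \<le> 3 powr \<beta> * R powr (-\<beta>) * M powr (-\<beta>)"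
    by (simp add: mult_left_mono mult.commute)
  then show ?thesis
    by (simp add: distrib_left add_increasing2)
qed

section \<open>Weights, kernel and the three regions\<close>

definition output_weight :: "real \<Rightarrow> real \<Rightarrow> real \<times> real \<Rightarrow> real" where
  "output_weight s a p = jbr (fst p) powr (2 * s) * jbr (snd p) powr (-2 * a)"

(* The reciprocal of the X^{k,b} weights of the two inputs, at q and at q - p. *)
definition Xsb_kernel :: "real \<Rightarrow> real \<Rightarrow> real \<times> real \<Rightarrow> real \<times> real \<Rightarrow> real" where
  "Xsb_kernel k b p q = jbr (fst q) powr (-k) * jbr (fst q - fst p) powr (-k)
     * modulation q powr (-b) * modulation (q - p) powr (-b)"

lemma output_weight_nonneg [simp]: "0 \<le> output_weight s a p"
  by (simp add: output_weight_def)

lemma Xsb_kernel_nonneg [simp]: "0 \<le> Xsb_kernel k b p q"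
  by (simp add: Xsb_kernel_def)

lemma Xsb_kernel_power2:
  "(Xsb_kernel k b p q)\<^sup>2 = jbr (fst q) powr (-2*k) * jbr (fst q - fst p) powr (-2*k)
     * modulation q powr (-2*b) * modulation (q - p) powr (-2*b)"
  unfolding Xsb_kernel_def by (simp add: power_mult_distrib powr_power less_imp_neq[OF modulation_pos, symmetric])

definition time_dominant :: "real \<times> real \<Rightarrow> real \<times> real \<Rightarrow> bool" where
  "time_dominant p q \<longleftrightarrow> modulation q \<le> jbr (snd p) \<and> modulation (q - p) \<le> jbr (snd p)"

definition high_high :: "real \<times> real \<Rightarrow> real \<times> real \<Rightarrow> bool" where
  "high_high p q \<longleftrightarrow> 2 * \<bar>fst p\<bar> < \<bar>fst q\<bar> \<and> 2 * \<bar>fst p\<bar> < \<bar>fst q - fst p\<bar>"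

(* The squared kernel is integrated in q for fixed p on region_A, in p for fixed q on
   region_B, and in p for fixed q - p on region_C. *)
definition region_A :: "real \<times> real \<Rightarrow> real \<times> real \<Rightarrow> bool" where
  "region_A p q \<longleftrightarrow> 1 \<le> \<bar>fst p\<bar> \<and> (time_dominant p q \<or> \<not> high_high p q)"

definition region_B :: "real \<times> real \<Rightarrow> real \<times> real \<Rightarrow> bool" where
  "region_B p q \<longleftrightarrow> \<bar>fst p\<bar> < 1
     \<or> \<not> time_dominant p q \<and> high_high p q \<and> modulation (q - p) \<le> modulation q"

definition region_C :: "real \<times> real \<Rightarrow> real \<times> real \<Rightarrow> bool" where
  "region_C p q \<longleftrightarrow> 1 \<le> \<bar>fst p\<bar> \<and> \<not> time_dominant p q \<and> high_high p q \<and> modulation q < modulation (q - p)"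

lemma regions_cover: "region_A p q \<or> region_B p q \<or> region_C p q"
  unfolding region_A_def region_B_def region_C_def by auto

lemma time_dominant_factor_le:
  assumes "time_dominant p q" "1 \<le> \<bar>fst p\<bar>" "0 \<le> 2*a + 4*k" "0 \<le> a"
  shows "jbr (snd p) powr (-2*a) * (jbr (fst q) powr (-2*k) * jbr (fst q - fst p) powr (-2*k))
    \<le> 3 powr (2*a) * jbr (fst p) powr (frequency_exponent k)"
proof -
  let ?R = "jbr (resonance (fst p) (fst q))"
  have "?R \<le> 3 * jbr (snd p)"
    using jbr_resonance_le_max[of p q] assms(1) by (simp add: time_dominant_def)
  then have "jbr (snd p) powr (-2*a) \<le> 3 powr (2*a) * ?R powr (-2*a)"
    using powr_minus_le_of_le_mult[of ?R "jbr (snd p)" 3 "2*a"] assms by simp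
  then have "jbr (snd p) powr (-2*a) * (jbr (fst q) powr (-2*k) * jbr (fst q - fst p) powr (-2*k))
      \<le> 3 powr (2*a) * (jbr (fst q) powr (-2*k) * jbr (fst q - fst p) powr (-2*k) * ?R powr (-2*a))"
    by (simp add: mult_right_mono mult_ac)
  also have "\<dots> \<le> 3 powr (2*a) * jbr (fst p) powr (frequency_exponent k)"
    using frequency_factor_le_resonance[of "fst p" a k "fst q"] assms by simp
  finally show ?thesis .
qed

lemma comparable_factor_le:
  assumes "\<not> time_dominant p q" "\<bar>fst q\<bar> \<le> 3 * \<bar>fst p\<bar>" "0 \<le> a" "0 \<le> b"
  shows "jbr (snd p) powr (-2*a) * (jbr (fst q) powr (-2*k) * jbr (fst q - fst p) powr (-2*k))
      * (modulation q powr (-2*b) * modulation (q - p) powr (-2*b))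
    \<le> 12 powr (2*\<bar>k\<bar>) * jbr (fst p) powr (frequency_exponent k)
      * (3 powr (2*b) * jbr (resonance (fst p) (fst q)) powr (-2*b) * (modulation q powr (-2*b) + modulation (q - p) powr (-2*b)))"
proof (rule mult_mono)
  let ?J = "jbr (fst q) powr (-2*k) * jbr (fst q - fst p) powr (-2*k)"
  have "jbr (snd p) powr (-2*a) * ?J \<le> 1 * ?J"
    using jbr_powr_le_1[of "-2*a" "snd p"] assms by (intro mult_right_mono) auto
  also have "\<dots> \<le> 12 powr (2*\<bar>k\<bar>) * jbr (fst p) powr (frequency_exponent k)"
    using frequency_factor_le_of_comparable[OF assms(2)] by simp
  finally show "jbr (snd p) powr (-2*a) * ?J \<le> 12 powr (2*\<bar>k\<bar>) * jbr (fst p) powr (frequency_exponent k)" .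
  have "jbr (resonance (fst p) (fst q)) \<le> 3 * max (modulation q) (modulation (q - p))"
    using jbr_resonance_le_max[of p q] assms(1) by (auto simp: time_dominant_def max_def)
  then show "modulation q powr (-2*b) * modulation (q - p) powr (-2*b)
      \<le> 3 powr (2*b) * jbr (resonance (fst p) (fst q)) powr (-2*b) * (modulation q powr (-2*b) + modulation (q - p) powr (-2*b))"
    using mult_powr_minus_le_of_le_max[of "jbr (resonance (fst p) (fst q))" "modulation q" "modulation (q - p)" "2*b"] assms
    by simp
qed simp_all

lemma region_A_pointwise:
  assumes "region_A p q" "0 \<le> 2*a + 4*k" "0 \<le> a" "0 \<le> b"
  shows "output_weight s a p * (Xsb_kernel k b p q)\<^sup>2
    \<le> (3 powr (2*a) + 3 powr (2*b) * 12 powr (2*\<bar>k\<bar>)) * jbr (fst p) powr (2 * s + frequency_exponent k)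
      * (modulation q powr (-2*b) * modulation (q - p) powr (-2*b)
         + jbr (resonance (fst p) (fst q)) powr (-2*b) * modulation q powr (-2*b)
         + jbr (resonance (fst p) (fst q)) powr (-2*b) * modulation (q - p) powr (-2*b))"
proof -
  define T J M M' Q E where "T = jbr (snd p) powr (-2*a)"
    and "J = jbr (fst q) powr (-2*k) * jbr (fst q - fst p) powr (-2*k)"
    and "M = modulation q powr (-2*b)" and "M' = modulation (q - p) powr (-2*b)"
    and "Q = jbr (resonance (fst p) (fst q)) powr (-2*b)"
    and "E = jbr (fst p) powr (frequency_exponent k)"
  have nonneg: "0 \<le> T" "0 \<le> J" "0 \<le> M" "0 \<le> M'" "0 \<le> Q" "0 \<le> E"
    unfolding T_def J_def M_def M'_def Q_def E_def by simp_all
  have "T * J * (M * M') \<le> (3 powr (2*a) + 3 powr (2*b) * 12 powr (2*\<bar>k\<bar>)) * E * (M * M' + Q * M + Q * M')"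
  proof (cases "time_dominant p q")
    case True
    then have "T * J * (M * M') \<le> 3 powr (2*a) * E * (M * M')"
      using time_dominant_factor_le[of p q a k] assms nonneg
      unfolding T_def J_def E_def by (intro mult_right_mono) (auto simp: region_A_def)
    then show ?thesis
      using nonneg by (elim order_trans) (intro mult_mono add_increasing2; simp)
  next
    case False
    with assms(1) have "\<bar>fst q\<bar> \<le> 3 * \<bar>fst p\<bar>"
      unfolding region_A_def high_high_def by auto
    then have "T * J * (M * M') \<le> 12 powr (2*\<bar>k\<bar>) * E * (3 powr (2*b) * Q * (M + M'))"
      using comparable_factor_le[OF False _ assms(3,4)]
      unfolding T_def J_def M_def M'_def Q_def E_def by simp
    then show ?thesis
      using nonneg by (elim order_trans) (simp add: algebra_simps add_increasing)
  qed
  then have "jbr (fst p) powr (2 * s) * (T * J * (M * M'))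
      \<le> (3 powr (2*a) + 3 powr (2*b) * 12 powr (2*\<bar>k\<bar>)) * (jbr (fst p) powr (2 * s) * E) * (M * M' + Q * M + Q * M')"
    by (simp add: mult_left_mono mult_ac)
  then show ?thesis
    unfolding T_def J_def M_def M'_def Q_def E_def
    by (simp add: output_weight_def Xsb_kernel_power2 powr_add mult_ac)
qed

lemma low_frequency_pointwise:
  assumes "\<bar>fst p\<bar> < 1" "0 \<le> b"
  shows "output_weight s a p * (Xsb_kernel k b p q)\<^sup>2
    \<le> 2 powr (2*\<bar>s\<bar>) * 2 powr (2*\<bar>k\<bar>) * jbr (fst q) powr (-4*k) * jbr (snd p) powr (-2*a)
      * modulation (q - p) powr (-2*b)"
proof -
  define X T J M M' where "X = jbr (fst p) powr (2 * s)" and "T = jbr (snd p) powr (-2*a)"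
    and "J = jbr (fst q) powr (-2*k) * jbr (fst q - fst p) powr (-2*k)"
    and "M = modulation q powr (-2*b)" and "M' = modulation (q - p) powr (-2*b)"
  have "jbr (fst p) \<le> 2"
    using assms by (simp add: jbr_def)
  have "jbr (fst q - fst p) \<le> jbr (fst q) * jbr (fst p)"
    by (rule jbr_diff_le_mult)
  also have "\<dots> \<le> jbr (fst q) * 2"
    using \<open>jbr (fst p) \<le> 2\<close> by (intro mult_left_mono) auto
  finally have c1: "jbr (fst q - fst p) \<le> 2 * jbr (fst q)"
    by simp
  have "jbr (fst q) \<le> jbr (fst q - fst p) * jbr (fst p)"
    by (rule jbr_le_mult) linarith
  also have "\<dots> \<le> jbr (fst q - fst p) * 2"
    using \<open>jbr (fst p) \<le> 2\<close> by (intro mult_left_mono) auto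
  finally have c2: "jbr (fst q) \<le> 2 * jbr (fst q - fst p)"
    by simp
  have J: "J \<le> 2 powr (2*\<bar>k\<bar>) * jbr (fst q) powr (-4*k)"
    unfolding J_def using jbr_powr_mult_le_of_comparable[OF c1 c2, of k] by (simp add: mult.commute)
  have "X \<le> jbr (fst p) powr (2*\<bar>s\<bar>)"
    unfolding X_def by (intro powr_mono) auto
  also have "\<dots> \<le> 2 powr (2*\<bar>s\<bar>)"
    using \<open>jbr (fst p) \<le> 2\<close> by (intro powr_mono2) auto
  finally have X: "X \<le> 2 powr (2*\<bar>s\<bar>)" .
  have M: "M \<le> 1"
    unfolding M_def using assms powr_mono[of "-2*b" 0 "modulation q"] by simp
  have "X * T * (J * M * M') \<le> 2 powr (2*\<bar>s\<bar>) * T * ((2 powr (2*\<bar>k\<bar>) * jbr (fst q) powr (-4*k)) * 1 * M')"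
    using X J M by (intro mult_mono) (simp_all add: X_def T_def J_def M_def M'_def)
  then show ?thesis
    unfolding X_def T_def J_def M_def M'_def by (simp add: output_weight_def Xsb_kernel_power2 mult_ac)
qed

lemma high_high_jbr_comparable:
  assumes "high_high p q"
  shows "jbr (fst q) \<le> 2 * jbr (fst q - fst p)" "jbr (fst q - fst p) \<le> 2 * jbr (fst q)"
proof -
  have "\<bar>fst q\<bar> \<le> \<bar>fst q - fst p\<bar> + \<bar>fst p\<bar>"
    by linarith
  moreover have "\<bar>fst q - fst p\<bar> \<le> \<bar>fst q\<bar> + \<bar>fst p\<bar>"
    by linarith
  ultimately show "jbr (fst q) \<le> 2 * jbr (fst q - fst p)" "jbr (fst q - fst p) \<le> 2 * jbr (fst q)"
    using assms unfolding high_high_def jbr_def by auto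
qed

lemma high_high_resonance_ge:
  assumes "high_high p q" "\<eta> = fst q \<or> \<eta> = fst q - fst p"
  shows "\<bar>\<eta> * fst p / 2\<bar> \<le> \<bar>resonance (fst p) (fst q)\<bar>"
proof -
  have "\<bar>\<eta>\<bar> \<le> \<bar>fst q + (fst q - fst p)\<bar>"
    using assms unfolding high_high_def by auto
  then have "\<bar>fst p\<bar> * \<bar>\<eta>\<bar> / 2 \<le> \<bar>fst p\<bar> * \<bar>fst q + (fst q - fst p)\<bar> / 2"
    by (intro divide_right_mono mult_left_mono) auto
  then have "\<bar>\<eta> * fst p / 2\<bar> \<le> \<bar>fst p\<bar> * \<bar>fst q + (fst q - fst p)\<bar> / 2"
    by (simp add: abs_mult mult.commute)
  also have "\<dots> = \<bar>fst p * (fst q + (fst q - fst p)) / 2\<bar>"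
    by (simp add: abs_mult)
  also have "fst p * (fst q + (fst q - fst p)) / 2 = resonance (fst p) (fst q)"
    by (simp add: resonance_def power2_eq_square field_simps)
  finally show ?thesis .
qed

lemma high_high_pointwise:
  assumes "high_high p q" "\<not> time_dominant p q" "0 \<le> a" "0 \<le> b"
    and \<eta>: "\<eta> = fst q \<or> \<eta> = fst q - fst p"
    and M: "M = modulation q \<and> M' = modulation (q - p) \<or> M = modulation (q - p) \<and> M' = modulation q"
    and "M' \<le> M"
  shows "output_weight s a p * (Xsb_kernel k b p q)\<^sup>2
    \<le> 2 powr (2*\<bar>k\<bar>) * 3 powr (2*b) * jbr \<eta> powr (2 * max s 0 - 4*k)
      * jbr (\<eta> * fst p / 2) powr (-2*b) * M' powr (-2*b)"
proof -
  define X T J where "X = jbr (fst p) powr (2 * s)" and "T = jbr (snd p) powr (-2*a)"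
    and "J = jbr (fst q) powr (-2*k) * jbr (fst q - fst p) powr (-2*k)"
  have "jbr (resonance (fst p) (fst q)) \<le> 3 * M"
    using jbr_resonance_le_max[of p q] assms(2,7) M by (auto simp: time_dominant_def max_def)
  then have "M powr (-2*b) \<le> 3 powr (2*b) * jbr (resonance (fst p) (fst q)) powr (-2*b)"
    using powr_minus_le_of_le_mult[of _ M 3 "2*b"] M assms by auto
  also have "\<dots> \<le> 3 powr (2*b) * jbr (\<eta> * fst p / 2) powr (-2*b)"
    using high_high_resonance_ge[OF assms(1) \<eta>] assms by (intro mult_left_mono jbr_powr_antimono) auto
  finally have M_le: "M powr (-2*b) \<le> 3 powr (2*b) * jbr (\<eta> * fst p / 2) powr (-2*b)" .
  have J: "J \<le> 2 powr (2*\<bar>k\<bar>) * jbr \<eta> powr (-4*k)"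
    using \<eta> jbr_powr_mult_le_of_comparable[OF high_high_jbr_comparable[OF assms(1)], of k]
      jbr_powr_mult_le_of_comparable[OF high_high_jbr_comparable(2,1)[OF assms(1)], of k]
    unfolding J_def by (auto simp: mult.commute)
  have X: "X \<le> jbr \<eta> powr (2 * max s 0)"
  proof -
    have "\<bar>fst p\<bar> \<le> \<bar>\<eta>\<bar>"
      using assms(1) \<eta> unfolding high_high_def by auto
    then have "X \<le> jbr (fst p) powr (2 * max s 0)"
      unfolding X_def by (intro powr_mono) auto
    also have "\<dots> \<le> jbr \<eta> powr (2 * max s 0)"
      using \<open>\<bar>fst p\<bar> \<le> \<bar>\<eta>\<bar>\<close> by (intro jbr_powr_mono) auto
    finally show ?thesis .
  qed
  have T: "T \<le> 1"
    unfolding T_def using assms by (intro jbr_powr_le_1) simp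
  have "output_weight s a p * (Xsb_kernel k b p q)\<^sup>2 = X * T * J * M powr (-2*b) * M' powr (-2*b)"
    using M unfolding X_def T_def J_def by (auto simp: output_weight_def Xsb_kernel_power2 mult_ac)
  also have "\<dots> \<le> jbr \<eta> powr (2 * max s 0) * 1 * (2 powr (2*\<bar>k\<bar>) * jbr \<eta> powr (-4*k))
      * (3 powr (2*b) * jbr (\<eta> * fst p / 2) powr (-2*b)) * M' powr (-2*b)"
    using X T J M_le by (intro mult_mono mult_nonneg_nonneg) (simp_all add: X_def T_def J_def)
  also have "\<dots> = 2 powr (2*\<bar>k\<bar>) * 3 powr (2*b) * (jbr \<eta> powr (2 * max s 0) * jbr \<eta> powr (-4*k))
      * jbr (\<eta> * fst p / 2) powr (-2*b) * M' powr (-2*b)"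
    by (simp add: mult_ac)
  finally show ?thesis
    by (simp add: powr_add[symmetric])
qed

section \<open>Integrals over the regions\<close>

lemma nn_integral_lborel_pair:
  fixes h :: "real \<times> real \<Rightarrow> ennreal"
  assumes "h \<in> borel_measurable (lborel \<Otimes>\<^sub>M lborel)"
  shows "(\<integral>\<^sup>+z. h z \<partial>lborel) = (\<integral>\<^sup>+x. (\<integral>\<^sup>+y. h (x, y) \<partial>lborel) \<partial>lborel)"
  using lborel.nn_integral_fst[OF assms] by (simp add: lborel_prod)

lemma nn_integral_jbr_shear_eq:
  assumes "\<alpha> \<noteq> 0" and [measurable]: "c \<in> borel_measurable borel"
  shows "ennreal \<bar>\<alpha>\<bar> * (\<integral>\<^sup>+q. ennreal (jbr (\<beta> + \<alpha> * fst q) powr (-p1) * jbr (snd q - c (fst q)) powr (-p2)) \<partial>lborel)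
    = jbr_integral p1 * jbr_integral p2"
proof -
  have "(\<integral>\<^sup>+q. ennreal (jbr (\<beta> + \<alpha> * fst q) powr (-p1) * jbr (snd q - c (fst q)) powr (-p2)) \<partial>lborel)
      = (\<integral>\<^sup>+x. (\<integral>\<^sup>+t. ennreal (jbr (\<beta> + \<alpha> * x) powr (-p1)) * ennreal (jbr (t - c x) powr (-p2)) \<partial>lborel) \<partial>lborel)"
    by (subst nn_integral_lborel_pair) (measurable, simp add: ennreal_mult)
  also have "\<dots> = (\<integral>\<^sup>+x. ennreal (jbr (\<beta> + \<alpha> * x) powr (-p1)) * jbr_integral p2 \<partial>lborel)"
    by (simp add: nn_integral_cmult jbr_integral_shift)
  also have "\<dots> = (\<integral>\<^sup>+x. ennreal (jbr (\<beta> + \<alpha> * x) powr (-p1)) \<partial>lborel) * jbr_integral p2"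
    by (rule nn_integral_multc) measurable
  finally show ?thesis
    using jbr_integral_affine[OF assms(1), of \<beta> p1] by (simp add: mult.assoc[symmetric])
qed

lemma nn_integral_modulation_product_le:
  assumes "fst p \<noteq> 0" "1 < 2*b"
  shows "ennreal \<bar>fst p\<bar> * (\<integral>\<^sup>+q. ennreal (modulation q powr (-2*b) * modulation (q - p) powr (-2*b)) \<partial>lborel)
    \<le> ennreal (2 powr (2*b)) * (2 * jbr_integral (2*b)) * jbr_integral (2*b)"
proof -
  obtain x t where p: "p = (x, t)"
    by (cases p)
  let ?I = "2 * jbr_integral (2*b)"
  have inner: "(\<integral>\<^sup>+t1. ennreal (modulation (x1, t1) powr (-2*b) * modulation ((x1, t1) - p) powr (-2*b)) \<partial>lborel)
      \<le> ennreal (2 powr (2*b)) * ennreal (jbr ((t - x\<^sup>2/2) + x * x1) powr (-(2*b))) * ?I" for x1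
  proof -
    have mod_eq: "modulation (x1, t1) = jbr (t1 - (- (x1\<^sup>2/2)))"
        "modulation ((x1, t1) - p) = jbr (t1 - (t - (x1 - x)\<^sup>2/2))" for t1
      by (simp_all add: modulation_def p algebra_simps)
    have "- (x1\<^sup>2/2) - (t - (x1 - x)\<^sup>2/2) = - ((t - x\<^sup>2/2) + x * x1)"
      by (simp add: power2_eq_square field_simps)
    then have "jbr (- (x1\<^sup>2/2) - (t - (x1 - x)\<^sup>2/2)) = jbr ((t - x\<^sup>2/2) + x * x1)"
      by (simp only: jbr_uminus)
    with mod_eq show ?thesis
      using nn_integral_jbr_powr_mult_le[of "2*b" "2*b" "- (x1\<^sup>2/2)" "t - (x1 - x)\<^sup>2/2"] assms
      by (simp add: ennreal_mult)
  qed
  have "(\<integral>\<^sup>+q. ennreal (modulation q powr (-2*b) * modulation (q - p) powr (-2*b)) \<partial>lborel)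
      = (\<integral>\<^sup>+x1. (\<integral>\<^sup>+t1. ennreal (modulation (x1, t1) powr (-2*b) * modulation ((x1, t1) - p) powr (-2*b)) \<partial>lborel) \<partial>lborel)"
    by (rule nn_integral_lborel_pair) (unfold modulation_def fst_diff snd_diff, measurable)
  also have "\<dots> \<le> (\<integral>\<^sup>+x1. ennreal (2 powr (2*b)) * ennreal (jbr ((t - x\<^sup>2/2) + x * x1) powr (-(2*b))) * ?I \<partial>lborel)"
    by (intro nn_integral_mono inner)
  also have "\<dots> = ennreal (2 powr (2*b)) * (\<integral>\<^sup>+x1. ennreal (jbr ((t - x\<^sup>2/2) + x * x1) powr (-(2*b))) \<partial>lborel) * ?I"
    by (simp add: nn_integral_cmult nn_integral_multc mult.assoc)
  finally have "ennreal \<bar>x\<bar> * (\<integral>\<^sup>+q. ennreal (modulation q powr (-2*b) * modulation (q - p) powr (-2*b)) \<partial>lborel)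
      \<le> ennreal (2 powr (2*b)) * ?I * (ennreal \<bar>x\<bar> * (\<integral>\<^sup>+x1. ennreal (jbr ((t - x\<^sup>2/2) + x * x1) powr (-(2*b))) \<partial>lborel))"
    by (simp add: mult_left_mono mult_ac)
  then show ?thesis
    using jbr_integral_affine[of x "t - x\<^sup>2/2" "2*b"] assms by (simp add: p)
qed

lemma nn_integral_resonance_shear_eq:
  assumes "fst p \<noteq> 0" and [measurable]: "c \<in> borel_measurable borel"
  shows "ennreal \<bar>fst p\<bar> * (\<integral>\<^sup>+q. ennreal (jbr (resonance (fst p) (fst q)) powr (-2*b) * jbr (snd q - c (fst q)) powr (-2*b)) \<partial>lborel)
    = jbr_integral (2*b) * jbr_integral (2*b)"
  using nn_integral_jbr_shear_eq[OF assms, of "- (fst p)\<^sup>2 / 2" "2*b" "2*b"]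
  by (simp add: resonance_def algebra_simps)

lemma nn_integral_region_A_majorant_le:
  assumes "fst p \<noteq> 0" "1 < 2*b"
  shows "ennreal \<bar>fst p\<bar> * (\<integral>\<^sup>+q. ennreal (modulation q powr (-2*b) * modulation (q - p) powr (-2*b)
      + jbr (resonance (fst p) (fst q)) powr (-2*b) * modulation q powr (-2*b)
      + jbr (resonance (fst p) (fst q)) powr (-2*b) * modulation (q - p) powr (-2*b)) \<partial>lborel)
    \<le> ennreal (2 powr (2*b)) * (2 * jbr_integral (2*b)) * jbr_integral (2*b)
      + 2 * (jbr_integral (2*b) * jbr_integral (2*b))"
proof -
  define P Q1 Q2 where "P q = modulation q powr (-2*b) * modulation (q - p) powr (-2*b)"
    and "Q1 q = jbr (resonance (fst p) (fst q)) powr (-2*b) * modulation q powr (-2*b)"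
    and "Q2 q = jbr (resonance (fst p) (fst q)) powr (-2*b) * modulation (q - p) powr (-2*b)"
    for q :: "real \<times> real"
  have mP: "(\<lambda>q. ennreal (P q)) \<in> borel_measurable lborel"
    unfolding P_def modulation_def fst_diff snd_diff lborel_prod[symmetric] by measurable
  have mQ1: "(\<lambda>q. ennreal (Q1 q)) \<in> borel_measurable lborel"
    unfolding Q1_def resonance_def modulation_def lborel_prod[symmetric] by measurable
  have mQ2: "(\<lambda>q. ennreal (Q2 q)) \<in> borel_measurable lborel"
    unfolding Q2_def resonance_def modulation_def fst_diff snd_diff lborel_prod[symmetric] by measurable
  have "(\<integral>\<^sup>+q. ennreal (P q + Q1 q + Q2 q) \<partial>lborel)
      = (\<integral>\<^sup>+q. ennreal (P q) \<partial>lborel) + (\<integral>\<^sup>+q. ennreal (Q1 q) \<partial>lborel) + (\<integral>\<^sup>+q. ennreal (Q2 q) \<partial>lborel)"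
    using mP mQ1 mQ2 by (simp add: P_def Q1_def Q2_def nn_integral_add)
  moreover have "ennreal \<bar>fst p\<bar> * (\<integral>\<^sup>+q. ennreal (P q) \<partial>lborel)
      \<le> ennreal (2 powr (2*b)) * (2 * jbr_integral (2*b)) * jbr_integral (2*b)"
    unfolding P_def using assms by (rule nn_integral_modulation_product_le)
  moreover have "ennreal \<bar>fst p\<bar> * (\<integral>\<^sup>+q. ennreal (Q1 q) \<partial>lborel) = jbr_integral (2*b) * jbr_integral (2*b)"
    using nn_integral_resonance_shear_eq[of p "\<lambda>\<xi>. - \<xi>\<^sup>2 / 2" b] assms
    by (simp add: Q1_def modulation_def)
  moreover have "ennreal \<bar>fst p\<bar> * (\<integral>\<^sup>+q. ennreal (Q2 q) \<partial>lborel) = jbr_integral (2*b) * jbr_integral (2*b)"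
    using nn_integral_resonance_shear_eq[of p "\<lambda>\<xi>. snd p - (\<xi> - fst p)\<^sup>2 / 2" b] assms
    by (simp add: Q2_def modulation_def algebra_simps)
  ultimately have "ennreal \<bar>fst p\<bar> * (\<integral>\<^sup>+q. ennreal (P q + Q1 q + Q2 q) \<partial>lborel)
      \<le> ennreal (2 powr (2*b)) * (2 * jbr_integral (2*b)) * jbr_integral (2*b)
        + jbr_integral (2*b) * jbr_integral (2*b) + jbr_integral (2*b) * jbr_integral (2*b)"
    by (simp only: distrib_left) (intro add_right_mono)
  then show ?thesis
    unfolding P_def Q1_def Q2_def by (simp only: mult_2 add.assoc)
qed

lemma region_A_bound:
  assumes "0 \<le> 2*a + 4*k" "0 \<le> a" "1 < 2*b" "2 * s + frequency_exponent k \<le> 1"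
  obtains C :: ennreal where "C < \<infinity>"
    "\<And>p. ennreal (output_weight s a p) * (\<integral>\<^sup>+q. ennreal (if region_A p q then (Xsb_kernel k b p q)\<^sup>2 else 0) \<partial>lborel) \<le> C"
proof
  let ?I = "jbr_integral (2*b)"
  define c where "c = 3 powr (2*a) + 3 powr (2*b) * 12 powr (2*\<bar>k\<bar>)"
  define Z where "Z = ennreal (2 powr (2*b)) * (2 * ?I) * ?I + 2 * (?I * ?I)"
  have c0: "0 \<le> c"
    unfolding c_def by (intro add_nonneg_nonneg mult_nonneg_nonneg) simp_all
  show "ennreal (2 * c) * Z < \<infinity>"
    unfolding Z_def using jbr_integral_finite[of "2*b"] assms
    by (simp add: ennreal_mult_less_top ennreal_mult_eq_top_iff less_top)
  fix p :: "real \<times> real"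
  define G where "G = jbr (fst p) powr (2 * s + frequency_exponent k)"
  define m where "m q = modulation q powr (-2*b) * modulation (q - p) powr (-2*b)
      + jbr (resonance (fst p) (fst q)) powr (-2*b) * modulation q powr (-2*b)
      + jbr (resonance (fst p) (fst q)) powr (-2*b) * modulation (q - p) powr (-2*b)" for q
  have m_meas: "(\<lambda>q. ennreal (m q)) \<in> borel_measurable lborel"
    unfolding m_def resonance_def modulation_def fst_diff snd_diff lborel_prod[symmetric]
    by measurable
  have K_meas: "(\<lambda>q. ennreal (if region_A p q then (Xsb_kernel k b p q)\<^sup>2 else 0)) \<in> borel_measurable lborel"
    unfolding region_A_def time_dominant_def high_high_def Xsb_kernel_def modulation_def fst_diff snd_diff
      lborel_prod[symmetric]
    by measurable
  show "ennreal (output_weight s a p) * (\<integral>\<^sup>+q. ennreal (if region_A p q then (Xsb_kernel k b p q)\<^sup>2 else 0) \<partial>lborel)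
      \<le> ennreal (2 * c) * Z"
  proof (cases "1 \<le> \<bar>fst p\<bar>")
    case True
    have "ennreal (output_weight s a p) * (\<integral>\<^sup>+q. ennreal (if region_A p q then (Xsb_kernel k b p q)\<^sup>2 else 0) \<partial>lborel)
        = (\<integral>\<^sup>+q. ennreal (output_weight s a p * (if region_A p q then (Xsb_kernel k b p q)\<^sup>2 else 0)) \<partial>lborel)"
      using K_meas by (simp add: nn_integral_cmult[symmetric] ennreal_mult)
    also have "\<dots> \<le> (\<integral>\<^sup>+q. ennreal (c * G) * ennreal (m q) \<partial>lborel)"
    proof (rule nn_integral_mono)
      fix q
      have "0 \<le> c * G * m q"
        using c0 unfolding G_def m_def by (intro add_nonneg_nonneg mult_nonneg_nonneg) simp_all
      then have "output_weight s a p * (if region_A p q then (Xsb_kernel k b p q)\<^sup>2 else 0) \<le> c * G * m q"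
        using region_A_pointwise[of p q a k b s] assms unfolding c_def G_def m_def by auto
      then show "ennreal (output_weight s a p * (if region_A p q then (Xsb_kernel k b p q)\<^sup>2 else 0))
          \<le> ennreal (c * G) * ennreal (m q)"
        using c0 by (simp add: ennreal_mult'[symmetric] G_def ennreal_leI)
    qed
    also have "\<dots> = ennreal (c * G / \<bar>fst p\<bar>) * (ennreal \<bar>fst p\<bar> * (\<integral>\<^sup>+q. ennreal (m q) \<partial>lborel))"
      using True c0 m_meas by (simp add: nn_integral_cmult G_def mult.assoc[symmetric] ennreal_mult[symmetric])
    also have "\<dots> \<le> ennreal (c * G / \<bar>fst p\<bar>) * Z"
      unfolding Z_def m_def using True assms by (intro mult_left_mono nn_integral_region_A_majorant_le) auto
    also have "\<dots> \<le> ennreal (2 * c) * Z"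
    proof (intro mult_right_mono ennreal_leI)
      have "G \<le> jbr (fst p) powr 1"
        unfolding G_def using assms by (intro powr_mono) auto
      also have "\<dots> \<le> 2 * \<bar>fst p\<bar>"
        using True by (simp add: jbr_def)
      finally have "c * G \<le> c * (2 * \<bar>fst p\<bar>)"
        using c0 by (rule mult_left_mono)
      then show "c * G / \<bar>fst p\<bar> \<le> 2 * c"
        using True by (simp add: divide_le_eq mult_ac)
    qed simp
    finally show ?thesis .
  qed (simp add: region_A_def)
qed

lemma nn_integral_high_high_le:
  assumes "2 \<le> \<bar>\<eta>\<bar>" "\<sigma> \<le> 1" and [measurable]: "c \<in> borel_measurable borel"
  shows "(\<integral>\<^sup>+p. ennreal (jbr \<eta> powr \<sigma> * (jbr (\<eta> * fst p / 2) powr (-2*b) * jbr (snd p - c (fst p)) powr (-2*b))) \<partial>lborel)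
    \<le> 3 * (jbr_integral (2*b) * jbr_integral (2*b))"
proof -
  let ?h = "\<lambda>p. ennreal (jbr (\<eta> * fst p / 2) powr (-2*b) * jbr (snd p - c (fst p)) powr (-2*b))"
  have h_meas: "?h \<in> borel_measurable lborel"
    unfolding lborel_prod[symmetric] by measurable
  have "jbr \<eta> powr \<sigma> \<le> jbr \<eta> powr 1"
    using assms by (intro powr_mono) auto
  also have "\<dots> \<le> 3 * \<bar>\<eta> / 2\<bar>"
    using assms by (simp add: jbr_def)
  finally have "ennreal (jbr \<eta> powr \<sigma>) \<le> ennreal (3 * \<bar>\<eta> / 2\<bar>)"
    by (rule ennreal_leI)
  also have "\<dots> = 3 * ennreal \<bar>\<eta> / 2\<bar>"
    by (subst ennreal_mult) auto
  finally have weight: "ennreal (jbr \<eta> powr \<sigma>) \<le> 3 * ennreal \<bar>\<eta> / 2\<bar>" .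
  have "(\<integral>\<^sup>+p. ennreal (jbr \<eta> powr \<sigma> * (jbr (\<eta> * fst p / 2) powr (-2*b) * jbr (snd p - c (fst p)) powr (-2*b))) \<partial>lborel)
      = ennreal (jbr \<eta> powr \<sigma>) * (\<integral>\<^sup>+p. ?h p \<partial>lborel)"
    using nn_integral_cmult[OF h_meas, of "ennreal (jbr \<eta> powr \<sigma>)"] by (simp add: ennreal_mult)
  also have "\<dots> \<le> 3 * (ennreal \<bar>\<eta> / 2\<bar> * (\<integral>\<^sup>+p. ?h p \<partial>lborel))"
    using weight by (simp add: mult_right_mono mult.assoc[symmetric])
  also have "ennreal \<bar>\<eta> / 2\<bar> * (\<integral>\<^sup>+p. ?h p \<partial>lborel) = jbr_integral (2*b) * jbr_integral (2*b)"
    using nn_integral_jbr_shear_eq[of "\<eta> / 2" c 0 "2*b" "2*b"] assms by simp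
  finally show ?thesis .
qed

lemma nn_integral_time_low_frequency_le:
  assumes "\<bar>x\<bar> \<le> 1" "0 \<le> a" "2*a \<le> 1" "1 < 2*b"
  shows "(\<integral>\<^sup>+t. ennreal (jbr t powr (-2*a) * modulation (q - (x, t)) powr (-2*b)) \<partial>lborel)
    \<le> ennreal (2 powr (4*a) * jbr (snd q + (fst q)\<^sup>2 / 2 - x * fst q) powr (-2*a)) * (2 * jbr_integral (2*b))"
proof -
  define \<gamma> \<mu> where "\<gamma> = snd q + (fst q - x)\<^sup>2 / 2" and "\<mu> = snd q + (fst q)\<^sup>2 / 2 - x * fst q"
  have "\<mu> = \<gamma> - x\<^sup>2 / 2"
    unfolding \<mu>_def \<gamma>_def by (simp add: power2_eq_square field_simps)
  then have "jbr \<mu> \<le> jbr \<gamma> * jbr (x\<^sup>2 / 2)"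
    using jbr_diff_le_mult[of \<gamma> "x\<^sup>2 / 2"] by simp
  also have "\<dots> \<le> jbr \<gamma> * 2"
    using assms abs_le_square_iff[of x 1] by (intro mult_left_mono) (auto simp: jbr_def)
  finally have \<gamma>: "jbr \<gamma> powr (-2*a) \<le> 2 powr (2*a) * jbr \<mu> powr (-2*a)"
    using powr_minus_le_of_le_mult[of "jbr \<mu>" "jbr \<gamma>" 2 "2*a"] assms by (simp add: mult.commute)
  have "modulation (q - (x, t)) = jbr (t - \<gamma>)" for t
    unfolding \<gamma>_def modulation_def by (subst jbr_minus_commute) (simp add: algebra_simps)
  then have "(\<integral>\<^sup>+t. ennreal (jbr t powr (-2*a) * modulation (q - (x, t)) powr (-2*b)) \<partial>lborel)
      = (\<integral>\<^sup>+t. ennreal (jbr (t - \<gamma>) powr (-2*b) * jbr (t - 0) powr (-2*a)) \<partial>lborel)"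
    by (simp add: mult.commute)
  also have "\<dots> \<le> ennreal (2 powr (2*a) * jbr \<gamma> powr (-2*a)) * (2 * jbr_integral (2*b))"
    using nn_integral_jbr_powr_mult_le[of "2*b" "2*a" \<gamma> 0] assms by simp
  also have "\<dots> \<le> ennreal (2 powr (2*a) * (2 powr (2*a) * jbr \<mu> powr (-2*a))) * (2 * jbr_integral (2*b))"
    using \<gamma> by (intro mult_right_mono ennreal_leI mult_left_mono) auto
  finally show ?thesis
    using powr_add[of 2 "2*a" "2*a"] by (simp add: \<mu>_def mult.assoc[symmetric])
qed

lemma nn_integral_low_frequency_le:
  assumes "0 \<le> a" "2*a \<le> 1" "0 < 2*a + 4*k" "1 < 2*b"
  shows "(\<integral>\<^sup>+p. ennreal (jbr (fst q) powr (-4*k)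
      * (indicator {-1..1} (fst p) * jbr (snd p) powr (-2*a) * modulation (q - p) powr (-2*b))) \<partial>lborel)
    \<le> ennreal (2 powr (4*a) * 2) * (2 * jbr_integral (2*b)) * (jbr_integral (1 + 2*a + 4*k) + 2)"
proof -
  define \<mu> where "\<mu> = snd q + (fst q)\<^sup>2 / 2"
  define C where "C = jbr (fst q) powr (-4*k) * 2 powr (4*a)"
  let ?I = "2 * jbr_integral (2*b)"
  have C: "0 \<le> C"
    unfolding C_def by simp
  let ?T = "\<lambda>x t. ennreal (jbr t powr (-2*a) * modulation (q - (x, t)) powr (-2*b))"
  have T_meas: "?T x \<in> borel_measurable lborel" for x
    unfolding modulation_def fst_diff snd_diff by measurable
  have "(\<lambda>p. ennreal (jbr (fst q) powr (-4*k) * indicator {-1..1} (fst p)) * ?T (fst p) (snd p))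
      \<in> borel_measurable (lborel \<Otimes>\<^sub>M lborel)"
    unfolding modulation_def fst_diff snd_diff by measurable
  from nn_integral_lborel_pair[OF this]
  have "(\<integral>\<^sup>+p. ennreal (jbr (fst q) powr (-4*k)
      * (indicator {-1..1} (fst p) * jbr (snd p) powr (-2*a) * modulation (q - p) powr (-2*b))) \<partial>lborel)
      = (\<integral>\<^sup>+x. (\<integral>\<^sup>+t. ennreal (jbr (fst q) powr (-4*k) * indicator {-1..1} x) * ?T x t \<partial>lborel) \<partial>lborel)"
    by (simp add: ennreal_mult[symmetric] mult.assoc del: ennreal_mult')
  also have "\<dots> = (\<integral>\<^sup>+x. ennreal (jbr (fst q) powr (-4*k) * indicator {-1..1} x) * (\<integral>\<^sup>+t. ?T x t \<partial>lborel) \<partial>lborel)"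
    using T_meas by (simp add: nn_integral_cmult)
  also have "\<dots> \<le> (\<integral>\<^sup>+x. ennreal C * ?I * ennreal (indicator {-1..1} x * jbr (\<mu> - x * fst q) powr (-2*a)) \<partial>lborel)"
  proof (rule nn_integral_mono)
    fix x
    show "ennreal (jbr (fst q) powr (-4*k) * indicator {-1..1} x) * (\<integral>\<^sup>+t. ?T x t \<partial>lborel)
        \<le> ennreal C * ?I * ennreal (indicator {-1..1} x * jbr (\<mu> - x * fst q) powr (-2*a))"
    proof (cases "x \<in> {-1..1}")
      case True
      then have "ennreal (jbr (fst q) powr (-4*k) * indicator {-1..1} x) * (\<integral>\<^sup>+t. ?T x t \<partial>lborel)
          \<le> ennreal (jbr (fst q) powr (-4*k)) * (ennreal (2 powr (4*a) * jbr (\<mu> - x * fst q) powr (-2*a)) * ?I)"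
        using nn_integral_time_low_frequency_le[of x a b q] assms
        by (simp add: \<mu>_def mult_left_mono abs_le_iff)
      also have "\<dots> = ennreal C * ?I * ennreal (indicator {-1..1} x * jbr (\<mu> - x * fst q) powr (-2*a))"
        using True by (simp add: C_def ennreal_mult mult_ac)
      finally show ?thesis .
    qed simp
  qed
  also have "\<dots> = ennreal C * ?I * (\<integral>\<^sup>+x. ennreal (indicator {-1..1} x * jbr (\<mu> - x * fst q) powr (-2*a)) \<partial>lborel)"
    by (rule nn_integral_cmult) measurable
  also have "\<dots> \<le> ennreal C * ?I * (ennreal (2 * jbr (fst q) powr (4*k)) * (jbr_integral (1 + 2*a + 4*k) + 2))"
    using nn_integral_jbr_powr_linear_le[of "2*a" "1 + 2*a + 4*k" \<mu> "fst q"] assms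
    by (intro mult_left_mono) auto
  also have "\<dots> = ennreal (C * (2 * jbr (fst q) powr (4*k))) * ?I * (jbr_integral (1 + 2*a + 4*k) + 2)"
    using C by (simp add: ennreal_mult mult_ac)
  also have "C * (2 * jbr (fst q) powr (4*k)) = 2 powr (4*a) * 2"
    unfolding C_def by (simp add: powr_minus field_simps)
  finally show ?thesis .
qed

lemma region_B_pointwise:
  assumes "0 \<le> a" "0 \<le> b"
  shows "output_weight s a p * (if region_B p q then (Xsb_kernel k b p q)\<^sup>2 else 0)
    \<le> 2 powr (2*\<bar>s\<bar>) * 2 powr (2*\<bar>k\<bar>) * (jbr (fst q) powr (-4*k)
        * (indicator {-1..1} (fst p) * jbr (snd p) powr (-2*a) * modulation (q - p) powr (-2*b)))
      + (if 2 \<le> \<bar>fst q\<bar> then 2 powr (2*\<bar>k\<bar>) * 3 powr (2*b) * (jbr (fst q) powr (2 * max s 0 - 4*k)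
          * (jbr (fst q * fst p / 2) powr (-2*b) * jbr (snd p - (snd q + (fst q - fst p)\<^sup>2 / 2)) powr (-2*b)))
         else 0)"
    (is "_ \<le> ?L + ?H")
proof -
  have LH: "0 \<le> ?L" "0 \<le> ?H"
    by simp_all
  show ?thesis
  proof (cases "region_B p q")
    case B: True
    show ?thesis
    proof (cases "\<bar>fst p\<bar> < 1")
      case True
      then have "indicator {-1..1} (fst p) = (1::real)"
        by (simp add: indicator_def abs_less_iff)
      then have "output_weight s a p * (Xsb_kernel k b p q)\<^sup>2 \<le> ?L"
        using low_frequency_pointwise[OF True, of b s a k q] assms by (simp add: mult_ac)
      then show ?thesis
        using B add_increasing2[OF LH(2)] by simp
    next
      case False
      with B have hh: "high_high p q" "\<not> time_dominant p q" "modulation (q - p) \<le> modulation q"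
        by (auto simp: region_B_def)
      then have "2 \<le> \<bar>fst q\<bar>"
        using False by (auto simp: high_high_def)
      moreover have "modulation (q - p) = jbr (snd p - (snd q + (fst q - fst p)\<^sup>2 / 2))"
        by (subst jbr_minus_commute) (simp add: modulation_def algebra_simps)
      ultimately have "output_weight s a p * (Xsb_kernel k b p q)\<^sup>2 \<le> ?H"
        using high_high_pointwise[OF hh(1,2), of a b "fst q" "modulation q" "modulation (q - p)" s k] hh(3) assms
        by (simp add: mult_ac)
      then show ?thesis
        using B add_increasing[OF LH(1)] by simp
    qed
  qed (use LH in simp)
qed

lemma region_B_bound:
  assumes "0 \<le> a" "2*a \<le> 1" "0 < 2*a + 4*k" "1 < 2*b" "2 * max s 0 - 4*k \<le> 1"
  obtains C :: ennreal where "C < \<infinity>"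
    "\<And>q. (\<integral>\<^sup>+p. ennreal (output_weight s a p) * ennreal (if region_B p q then (Xsb_kernel k b p q)\<^sup>2 else 0) \<partial>lborel) \<le> C"
proof
  let ?I = "jbr_integral (2*b)" and ?I' = "jbr_integral (1 + 2*a + 4*k)"
  define cL cH where "cL = 2 powr (2*\<bar>s\<bar>) * 2 powr (2*\<bar>k\<bar>)" and "cH = 2 powr (2*\<bar>k\<bar>) * 3 powr (2*b)"
  show "ennreal cL * (ennreal (2 powr (4*a) * 2) * (2 * ?I) * (?I' + 2)) + ennreal cH * (3 * (?I * ?I)) < \<infinity>"
    using jbr_integral_finite[of "2*b"] jbr_integral_finite[of "1 + 2*a + 4*k"] assms
    by (simp add: ennreal_mult_less_top ennreal_mult_eq_top_iff less_top)
  fix q :: "real \<times> real"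
  define L H where "L p = jbr (fst q) powr (-4*k)
      * (indicator {-1..1} (fst p) * jbr (snd p) powr (-2*a) * modulation (q - p) powr (-2*b))"
    and "H p = jbr (fst q) powr (2 * max s 0 - 4*k)
      * (jbr (fst q * fst p / 2) powr (-2*b) * jbr (snd p - (snd q + (fst q - fst p)\<^sup>2 / 2)) powr (-2*b))"
    for p :: "real \<times> real"
  have L_meas: "(\<lambda>p. ennreal (L p)) \<in> borel_measurable lborel"
    unfolding L_def modulation_def fst_diff snd_diff lborel_prod[symmetric] by measurable
  have H_meas: "(\<lambda>p. ennreal (H p)) \<in> borel_measurable lborel"
    unfolding H_def lborel_prod[symmetric] by measurable
  have "(\<integral>\<^sup>+p. ennreal (output_weight s a p) * ennreal (if region_B p q then (Xsb_kernel k b p q)\<^sup>2 else 0) \<partial>lborel)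
      \<le> (\<integral>\<^sup>+p. ennreal cL * ennreal (L p) + (if 2 \<le> \<bar>fst q\<bar> then ennreal cH * ennreal (H p) else 0) \<partial>lborel)"
  proof (rule nn_integral_mono)
    fix p
    have nonneg: "0 \<le> cL" "0 \<le> cH" "0 \<le> L p" "0 \<le> H p"
      unfolding cL_def cH_def L_def H_def by simp_all
    have "output_weight s a p * (if region_B p q then (Xsb_kernel k b p q)\<^sup>2 else 0)
        \<le> cL * L p + (if 2 \<le> \<bar>fst q\<bar> then cH * H p else 0)"
      unfolding cL_def cH_def L_def H_def using assms by (intro region_B_pointwise) auto
    then show "ennreal (output_weight s a p) * ennreal (if region_B p q then (Xsb_kernel k b p q)\<^sup>2 else 0)
        \<le> ennreal cL * ennreal (L p) + (if 2 \<le> \<bar>fst q\<bar> then ennreal cH * ennreal (H p) else 0)"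
      using nonneg by (cases "2 \<le> \<bar>fst q\<bar>")
        (simp_all add: ennreal_mult[symmetric] ennreal_plus[symmetric] ennreal_leI del: ennreal_plus)
  qed
  also have "\<dots> = ennreal cL * (\<integral>\<^sup>+p. ennreal (L p) \<partial>lborel)
      + (if 2 \<le> \<bar>fst q\<bar> then ennreal cH * (\<integral>\<^sup>+p. ennreal (H p) \<partial>lborel) else 0)"
    using L_meas H_meas by (simp add: nn_integral_add nn_integral_cmult)
  also have "\<dots> \<le> ennreal cL * (ennreal (2 powr (4*a) * 2) * (2 * ?I) * (?I' + 2)) + ennreal cH * (3 * (?I * ?I))"
  proof (intro add_mono mult_left_mono)
    show "(\<integral>\<^sup>+p. ennreal (L p) \<partial>lborel) \<le> ennreal (2 powr (4*a) * 2) * (2 * ?I) * (?I' + 2)"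
      unfolding L_def using assms(1-4) by (rule nn_integral_low_frequency_le)
    have "(\<lambda>\<xi>. snd q + (fst q - \<xi>)\<^sup>2 / 2) \<in> borel_measurable borel"
      by measurable
    then show "(if 2 \<le> \<bar>fst q\<bar> then ennreal cH * (\<integral>\<^sup>+p. ennreal (H p) \<partial>lborel) else 0) \<le> ennreal cH * (3 * (?I * ?I))"
      using nn_integral_high_high_le[of "fst q" "2 * max s 0 - 4*k" "\<lambda>\<xi>. snd q + (fst q - \<xi>)\<^sup>2 / 2" b] assms
      by (auto simp: H_def intro: mult_left_mono)
  qed simp
  finally show "(\<integral>\<^sup>+p. ennreal (output_weight s a p)
      * ennreal (if region_B p q then (Xsb_kernel k b p q)\<^sup>2 else 0) \<partial>lborel)
      \<le> ennreal cL * (ennreal (2 powr (4*a) * 2) * (2 * ?I) * (?I' + 2)) + ennreal cH * (3 * (?I * ?I))" .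
qed

lemma region_C_pointwise:
  assumes "0 \<le> a" "0 \<le> b"
  shows "output_weight s a p * (if region_C p (p + r) then (Xsb_kernel k b p (p + r))\<^sup>2 else 0)
    \<le> (if 2 \<le> \<bar>fst r\<bar> then 2 powr (2*\<bar>k\<bar>) * 3 powr (2*b) * (jbr (fst r) powr (2 * max s 0 - 4*k)
        * (jbr (fst r * fst p / 2) powr (-2*b) * jbr (snd p - (- (snd r + (fst p + fst r)\<^sup>2 / 2))) powr (-2*b)))
       else 0)"
proof (cases "region_C p (p + r)")
  case True
  then have hh: "high_high p (p + r)" "\<not> time_dominant p (p + r)" "modulation (p + r) \<le> modulation r"
    and "2 \<le> \<bar>fst r\<bar>"
    by (auto simp: region_C_def high_high_def)
  moreover have "modulation (p + r) = jbr (snd p - (- (snd r + (fst p + fst r)\<^sup>2 / 2)))"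
    by (simp add: modulation_def algebra_simps)
  ultimately show ?thesis
    using high_high_pointwise[OF hh(1,2), of a b "fst r" "modulation r" "modulation (p + r)" s k] assms
    by (simp add: mult_ac)
qed simp

lemma region_C_bound:
  assumes "0 \<le> a" "1 < 2*b" "2 * max s 0 - 4*k \<le> 1"
  obtains C :: ennreal where "C < \<infinity>"
    "\<And>r. (\<integral>\<^sup>+p. ennreal (output_weight s a p)
        * ennreal (if region_C p (p + r) then (Xsb_kernel k b p (p + r))\<^sup>2 else 0) \<partial>lborel) \<le> C"
proof
  let ?I = "jbr_integral (2*b)"
  define cH where "cH = 2 powr (2*\<bar>k\<bar>) * 3 powr (2*b)"
  show "ennreal cH * (3 * (?I * ?I)) < \<infinity>"
    using jbr_integral_finite[of "2*b"] assms by (simp add: ennreal_mult_less_top ennreal_mult_eq_top_iff less_top)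
  fix r :: "real \<times> real"
  define c H where "c \<xi> = - (snd r + (\<xi> + fst r)\<^sup>2 / 2)"
    and "H p = jbr (fst r) powr (2 * max s 0 - 4*k) * (jbr (fst r * fst p / 2) powr (-2*b) * jbr (snd p - c (fst p)) powr (-2*b))"
    for \<xi> :: real and p :: "real \<times> real"
  have c_meas: "c \<in> borel_measurable borel"
    unfolding c_def by measurable
  have "(\<integral>\<^sup>+p. ennreal (output_weight s a p)
      * ennreal (if region_C p (p + r) then (Xsb_kernel k b p (p + r))\<^sup>2 else 0) \<partial>lborel)
      \<le> (\<integral>\<^sup>+p. (if 2 \<le> \<bar>fst r\<bar> then ennreal cH * ennreal (H p) else 0) \<partial>lborel)"
  proof (rule nn_integral_mono)
    fix p
    have "output_weight s a p * (if region_C p (p + r) then (Xsb_kernel k b p (p + r))\<^sup>2 else 0)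
        \<le> (if 2 \<le> \<bar>fst r\<bar> then cH * H p else 0)"
      unfolding cH_def H_def c_def using assms by (intro region_C_pointwise) auto
    then have "ennreal (output_weight s a p * (if region_C p (p + r) then (Xsb_kernel k b p (p + r))\<^sup>2 else 0))
        \<le> ennreal (if 2 \<le> \<bar>fst r\<bar> then cH * H p else 0)"
      by (rule ennreal_leI)
    then show "ennreal (output_weight s a p) * ennreal (if region_C p (p + r) then (Xsb_kernel k b p (p + r))\<^sup>2 else 0)
        \<le> (if 2 \<le> \<bar>fst r\<bar> then ennreal cH * ennreal (H p) else 0)"
      by (cases "2 \<le> \<bar>fst r\<bar>") (simp_all add: cH_def H_def ennreal_mult)
  qed
  also have "\<dots> \<le> ennreal cH * (3 * (?I * ?I))"
  proof (cases "2 \<le> \<bar>fst r\<bar>")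
    case True
    have "(\<lambda>p. ennreal (H p)) \<in> borel_measurable lborel"
      unfolding H_def c_def lborel_prod[symmetric] by measurable
    then have "(\<integral>\<^sup>+p. ennreal cH * ennreal (H p) \<partial>lborel) = ennreal cH * (\<integral>\<^sup>+p. ennreal (H p) \<partial>lborel)"
      by (rule nn_integral_cmult)
    also have "\<dots> \<le> ennreal cH * (3 * (?I * ?I))"
      unfolding H_def using nn_integral_high_high_le[OF True _ c_meas, of "2 * max s 0 - 4*k" b] assms
      by (intro mult_left_mono) auto
    finally show ?thesis
      using True by simp
  qed simp
  finally show "(\<integral>\<^sup>+p. ennreal (output_weight s a p)
      * ennreal (if region_C p (p + r) then (Xsb_kernel k b p (p + r))\<^sup>2 else 0) \<partial>lborel)
      \<le> ennreal cH * (3 * (?I * ?I))" .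
qed

definition input_weight :: "real \<Rightarrow> real \<Rightarrow> (real \<times> real \<Rightarrow> complex) \<Rightarrow> real \<times> real \<Rightarrow> real" where
  "input_weight k b U q = jbr (fst q) powr k * modulation q powr b * cmod (U q)"

lemma input_weight_nonneg [simp]: "0 \<le> input_weight k b U q"
  by (simp add: input_weight_def)

lemma Xsb_sq_eq_input_weight: "Xsb_sq k b U = (\<integral>\<^sup>+q. (ennreal (input_weight k b U q))\<^sup>2 \<partial>lborel)"
  unfolding Xsb_sq_def input_weight_def modulation_def
  by (simp add: ennreal_power power_mult_distrib powr_power mult.commute)

lemma norm_mult_eq_input_weight_kernel:
  "cmod (U q) * cmod (W (q - p)) = input_weight k b U q * input_weight k b W (q - p) * Xsb_kernel k b p q"
proof -
  have cancel: "x powr e * x powr (-e) = 1" if "0 < x" for x e :: real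
    using that by (simp add: powr_add[symmetric])
  have "input_weight k b U q * input_weight k b W (q - p) * Xsb_kernel k b p q
      = cmod (U q) * cmod (W (q - p))
        * ((jbr (fst q) powr k * jbr (fst q) powr (-k)) * (jbr (fst q - fst p) powr k * jbr (fst q - fst p) powr (-k))
          * (modulation q powr b * modulation q powr (-b)) * (modulation (q - p) powr b * modulation (q - p) powr (-b)))"
    by (simp add: input_weight_def Xsb_kernel_def mult_ac)
  then show ?thesis
    by (simp add: cancel)
qed

lemma norm_prod_conj_FT_le:
  "ennreal (cmod (prod_conj_FT U W p)) \<le> (\<integral>\<^sup>+q. ennreal (cmod (U q) * cmod (W (q - p))) \<partial>lborel)"
proof (cases "integrable lborel (\<lambda>q. U q * cnj (W (q - p)))")
  case True
  then show ?thesis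
    unfolding prod_conj_FT_def using integral_norm_bound_ennreal[OF True] by (simp add: norm_mult)
next
  case False
  then show ?thesis
    by (simp add: prod_conj_FT_def not_integrable_integral_eq)
qed

lemma measurable_fst_lborel_pair [measurable]: "fst \<in> measurable (lborel :: (real \<times> real) measure) borel"
  by (simp flip: lborel_prod)

lemma measurable_snd_lborel_pair [measurable]: "snd \<in> measurable (lborel :: (real \<times> real) measure) borel"
  by (simp flip: lborel_prod)

lemma ennreal_if_power2: "0 \<le> x \<Longrightarrow> (ennreal (if P then x else 0))\<^sup>2 = ennreal (if P then x\<^sup>2 else 0)"
  by (simp add: ennreal_power)

lemma HbHs_sq_prod_conj_FT_le_kernel:
  "HbHs_sq (-a) s (prod_conj_FT U W)
    \<le> (\<integral>\<^sup>+p. ennreal (output_weight s a p) * (\<integral>\<^sup>+q. ennreal (input_weight k b U q)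
        * ennreal (input_weight k b W (q - p)) * ennreal (Xsb_kernel k b p q) \<partial>lborel)\<^sup>2 \<partial>lborel)"
  unfolding HbHs_sq_def
proof (rule nn_integral_mono)
  fix p
  let ?F = "\<integral>\<^sup>+q. ennreal (input_weight k b U q) * ennreal (input_weight k b W (q - p)) * ennreal (Xsb_kernel k b p q) \<partial>lborel"
  have "ennreal (cmod (prod_conj_FT U W p)) \<le> ?F"
    using norm_prod_conj_FT_le[of U W p] by (simp add: norm_mult_eq_input_weight_kernel[of U _ W p k b] ennreal_mult)
  then have "ennreal (output_weight s a p) * (ennreal (cmod (prod_conj_FT U W p)))\<^sup>2 \<le> ennreal (output_weight s a p) * ?F\<^sup>2"
    by (intro mult_left_mono power_mono) simp_all
  then show "ennreal (jbr (fst p) powr (2 * s) * jbr (snd p) powr (2 * - a) * (cmod (prod_conj_FT U W p))\<^sup>2)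
      \<le> ennreal (output_weight s a p) * ?F\<^sup>2"
    by (simp add: output_weight_def ennreal_mult' ennreal_power[symmetric])
qed

lemma borel_measurable_input_weight:
  assumes "U \<in> borel_measurable lborel"
  shows "(\<lambda>q. ennreal (input_weight k b U q)) \<in> borel_measurable borel"
proof -
  have [measurable]: "U \<in> borel_measurable (lborel \<Otimes>\<^sub>M lborel)"
    using assms by (simp add: lborel_prod)
  show ?thesis
    unfolding input_weight_def modulation_def measurable_lborel2[symmetric] lborel_prod[symmetric] by measurable
qed

lemma HbHs_sq_prod_conj_FT_le:
  assumes "0 \<le> a" "2*a \<le> 1" "0 < 2*a + 4*k" "1 < 2*b" "2 * max s 0 - 4*k \<le> 1"
    and "2 * s + frequency_exponent k \<le> 1"
  obtains C :: ennreal where "C < \<infinity>"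
    "\<And>U W. U \<in> borel_measurable lborel \<Longrightarrow> W \<in> borel_measurable lborel \<Longrightarrow>
      HbHs_sq (-a) s (prod_conj_FT U W) \<le> C * (Xsb_sq k b U * Xsb_sq k b W)"
proof -
  obtain CA where CA: "CA < \<infinity>"
    "\<And>p. ennreal (output_weight s a p) * (\<integral>\<^sup>+q. ennreal (if region_A p q then (Xsb_kernel k b p q)\<^sup>2 else 0) \<partial>lborel) \<le> CA"
    using region_A_bound[of a k b s] assms by auto
  obtain CB where CB: "CB < \<infinity>"
    "\<And>q. (\<integral>\<^sup>+p. ennreal (output_weight s a p) * ennreal (if region_B p q then (Xsb_kernel k b p q)\<^sup>2 else 0) \<partial>lborel) \<le> CB"
    using region_B_bound[of a k b s] assms by auto
  obtain CC where CC: "CC < \<infinity>"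
    "\<And>r. (\<integral>\<^sup>+p. ennreal (output_weight s a p)
      * ennreal (if region_C p (p + r) then (Xsb_kernel k b p (p + r))\<^sup>2 else 0) \<partial>lborel) \<le> CC"
    using region_C_bound[of a b s k] assms by auto
  define KA KB KC where "KA p q = ennreal (if region_A p q then Xsb_kernel k b p q else 0)"
    and "KB p q = ennreal (if region_B p q then Xsb_kernel k b p q else 0)"
    and "KC p q = ennreal (if region_C p q then Xsb_kernel k b p q else 0)"
    for p q :: "real \<times> real"
  have mw: "(\<lambda>p. ennreal (output_weight s a p)) \<in> borel_measurable borel"
    unfolding output_weight_def measurable_lborel2[symmetric] lborel_prod[symmetric] by measurable
  have mKA: "case_prod KA \<in> borel_measurable (lborel \<Otimes>\<^sub>M lborel)"
    unfolding KA_def region_A_def time_dominant_def high_high_def Xsb_kernel_def modulation_def fst_diff snd_diff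
    by measurable
  have mKB: "case_prod KB \<in> borel_measurable (lborel \<Otimes>\<^sub>M lborel)"
    unfolding KB_def region_B_def time_dominant_def high_high_def Xsb_kernel_def modulation_def fst_diff snd_diff
    by measurable
  have mKC: "case_prod KC \<in> borel_measurable (lborel \<Otimes>\<^sub>M lborel)"
    unfolding KC_def region_C_def time_dominant_def high_high_def Xsb_kernel_def modulation_def fst_diff snd_diff
    by measurable
  show ?thesis
  proof
    show "3 * (CA + CB + CC) < \<infinity>"
      using CA CB CC by (simp add: ennreal_mult_less_top less_top)
    fix U W :: "real \<times> real \<Rightarrow> complex"
    assume "U \<in> borel_measurable lborel" "W \<in> borel_measurable lborel"
    note mf = borel_measurable_input_weight[OF this(1)] and mg = borel_measurable_input_weight[OF this(2)]
    have "HbHs_sq (-a) s (prod_conj_FT U W)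
        \<le> 3 * (CA + CB + CC) * ((\<integral>\<^sup>+q. (ennreal (input_weight k b U q))\<^sup>2 \<partial>lborel)
          * (\<integral>\<^sup>+q. (ennreal (input_weight k b W q))\<^sup>2 \<partial>lborel))"
    proof (rule order_trans[OF HbHs_sq_prod_conj_FT_le_kernel weighted_bilinear_bound_split3[OF mf mg mw mKA mKB mKC]])
      show "ennreal (Xsb_kernel k b p q) \<le> KA p q + KB p q + KC p q" for p q
        using regions_cover[of p q] by (auto simp: KA_def KB_def KC_def add_increasing add_increasing2)
      show "ennreal (output_weight s a p) * (\<integral>\<^sup>+q. (KA p q)\<^sup>2 \<partial>lborel) \<le> CA" for p
        using CA(2)[of p] by (simp add: KA_def ennreal_if_power2)
      show "(\<integral>\<^sup>+p. ennreal (output_weight s a p) * (KB p q)\<^sup>2 \<partial>lborel) \<le> CB" for q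
        using CB(2)[of q] by (simp add: KB_def ennreal_if_power2)
      show "(\<integral>\<^sup>+p. ennreal (output_weight s a p) * (KC p (p + r))\<^sup>2 \<partial>lborel) \<le> CC" for r
        using CC(2)[of r] by (simp add: KC_def ennreal_if_power2)
    qed
    then show "HbHs_sq (-a) s (prod_conj_FT U W) \<le> 3 * (CA + CB + CC) * (Xsb_sq k b U * Xsb_sq k b W)"
      by (simp add: Xsb_sq_eq_input_weight)
  qed
qed

lemma sqrt_enn2real_le_mult:
  fixes x C y z :: ennreal
  assumes "x \<le> C * (y * z)" "C < \<infinity>" "y < \<infinity>" "z < \<infinity>"
  shows "sqrt (enn2real x) \<le> sqrt (enn2real C) * sqrt (enn2real y) * sqrt (enn2real z)"
proof -
  have "enn2real x \<le> enn2real (C * (y * z))"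
    using assms by (intro enn2real_mono) (auto simp: ennreal_mult_less_top)
  then have "sqrt (enn2real x) \<le> sqrt (enn2real C * (enn2real y * enn2real z))"
    by (simp add: enn2real_mult)
  then show ?thesis
    by (simp add: real_sqrt_mult mult.assoc)
qed

theorem proposition3p3:
  fixes k s b a :: real
  assumes "max 0 s < 2 * k + 1/2" and "s \<le> k + 1/2"
    and "b > 1/2"
    and "max (1/4) (max 0 s - 2 * k) < a" and "a < 1/2"
  shows "\<exists>C. \<forall>U W. in_Xsb k b U \<longrightarrow> in_Xsb k b W \<longrightarrow>
           HbHs_sq (-a) s (prod_conj_FT U W) < \<infinity> \<and>
           HbHs_norm (-a) s (prod_conj_FT U W) \<le> C * Xsb_norm k b U * Xsb_norm k b W"
proof -
  have exponent: "2 * s + frequency_exponent k \<le> 1"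
    using assms(1,2) by (auto simp: frequency_exponent_def max_def split: if_splits)
  have "0 \<le> a" "2*a \<le> 1" "0 < 2*a + 4*k" "1 < 2*b" "2 * max s 0 - 4*k \<le> 1"
    using assms by (auto simp: max_def split: if_splits)
  then obtain C where C: "C < \<infinity>" and bound: "\<And>U W. U \<in> borel_measurable lborel \<Longrightarrow>
      W \<in> borel_measurable lborel \<Longrightarrow> HbHs_sq (-a) s (prod_conj_FT U W) \<le> C * (Xsb_sq k b U * Xsb_sq k b W)"
    using exponent by (rule HbHs_sq_prod_conj_FT_le) (rule that)
  show ?thesis
  proof (intro exI allI impI conjI)
    fix U W
    assume "in_Xsb k b U" "in_Xsb k b W"
    then have "HbHs_sq (-a) s (prod_conj_FT U W) \<le> C * (Xsb_sq k b U * Xsb_sq k b W)"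
      and "Xsb_sq k b U < \<infinity>" "Xsb_sq k b W < \<infinity>"
      using bound by (auto simp: in_Xsb_def)
    then show "HbHs_sq (-a) s (prod_conj_FT U W) < \<infinity>"
      and "HbHs_norm (-a) s (prod_conj_FT U W) \<le> sqrt (enn2real C) * Xsb_norm k b U * Xsb_norm k b W"
      using C sqrt_enn2real_le_mult
      by (auto simp: HbHs_norm_def Xsb_norm_def ennreal_mult_less_top intro: le_less_trans)
  qed
qed

end
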